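(* The Carlitz polynomials $\{G_j\}_{j\ge0}$ form an orthonormal basis of $C(O,K)$ if and only if the digit derivatives $\{D_j\}_{j\ge0}$ form an orthonormal basis of $C(O,K)$.
   Context: Let $q$ be a prime power, $K=\mathbf{F}_q((T))$, $O=\mathbf{F}_q[[T]]$, with absolute value $|x|=q^{-v(x)}$ where $v$ is the $T$-adic valuation. $C(O,K)$ is the $K$-Banach space of continuous functions $O\to K$ with sup-norm $\|f\|=\max_{t\in O}|f(t)|$. A sequence $(f_n)_{n\ge0}$ in $C(O,K)$ is an orthonormal basis if every $f$ can be written uniquely as $f=\sum a_nf_n$ with $a_n\in K$, $a_n\to0$, and then $\|f\|=\max|a_n|$. For $n\ge1$ put $[n]=T^{q^n}-T$, $F_0=1$, $F_n=[n][n-1]^q\cdots[1]^{q^{n-1}}$, $e_n(x)=\prod_{m\in\mathbf{F}_q[T],\deg m<n}(x-m)$ (including $m=0$); $E_0(x)=x$, $E_n(x)=e_n(x)/F_n$ for $n\ge1$. Hasse derivatives: $\mathcal{D}_n(\sum_ia_iT^i)=\sum_i\binom{i}{n}a_iT^{i-n}$ (binomials read in $\mathbf{F}_q$). For $j\ge0$ with base-$q$ expansion $j=\alpha_0+\alpha_1q+\cdots+\alpha_sq^s$ ($0\le\alpha_i<q$), set $G_j(x)=\prod_{n=0}^sE_n(x)^{\alpha_n}$ and $D_j(x)=\prod_{n=0}^s\mathcal{D}_n(x)^{\alpha_n}$, with $G_0=D_0=1$. (The paper also writes $\mathcal{D}_j$ for the digit derivative $D_j$.) *)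

theory Defs
  imports "HOL-Computational_Algebra.Computational_Algebra"
begin

text \<open>Setting: 'a is a finite field with q = (card (UNIV :: 'a set)) elements (so q is a prime power),
  K = 'a fls = F_q((T)), O = F_q[[T]] = elements of K with valuation >= 0 (including 0).\<close>

definition absK :: "'a::{finite,field} fls \<Rightarrow> real" where
  "absK x = (if x = 0 then 0 else real (card (UNIV :: 'a set)) powi (- fls_subdegree x))"

definition OK :: "'a::{finite,field} fls set" where
  "OK = {x. x = 0 \<or> fls_subdegree x \<ge> 0}"

text \<open>C(O,K): functions continuous on O (values outside O are irrelevant)\<close>
definition CK :: "('a::{finite,field} fls \<Rightarrow> 'a fls) set" where
  "CK = {f. \<forall>x\<in>OK. \<forall>e>0. \<exists>d>0. \<forall>y\<in>OK. absK (y - x) < d \<longrightarrow> absK (f y - f x) < e}"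

definition supnorm :: "('a::{finite,field} fls \<Rightarrow> 'a fls) \<Rightarrow> real" where
  "supnorm f = (SUP t\<in>OK. absK (f t))"

definition series_rep :: "(nat \<Rightarrow> 'a::{finite,field} fls) \<Rightarrow> (nat \<Rightarrow> 'a fls \<Rightarrow> 'a fls)
    \<Rightarrow> ('a fls \<Rightarrow> 'a fls) \<Rightarrow> bool" where
  "series_rep a b f \<longleftrightarrow>
     (\<lambda>N. supnorm (\<lambda>t. f t - (\<Sum>n<N. a n * b n t))) \<longlonglongrightarrow> 0"

definition is_ONB :: "(nat \<Rightarrow> 'a::{finite,field} fls \<Rightarrow> 'a fls) \<Rightarrow> bool" where
  "is_ONB b \<longleftrightarrow>
     (\<forall>n. b n \<in> CK) \<and>
     (\<forall>f\<in>CK. \<exists>!a. (\<lambda>n. absK (a n)) \<longlonglongrightarrow> 0 \<and> series_rep a b f) \<and>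
     (\<forall>f\<in>CK. \<forall>a. (\<lambda>n. absK (a n)) \<longlonglongrightarrow> 0 \<and> series_rep a b f
                   \<longrightarrow> supnorm f = (SUP n. absK (a n)))"

definition bracketK :: "nat \<Rightarrow> 'a::{finite,field} fls" where
  "bracketK n = fls_X ^ ((card (UNIV :: 'a set)) ^ n) - fls_X"

definition carlitzF :: "nat \<Rightarrow> 'a::{finite,field} fls" where
  "carlitzF n = (\<Prod>i\<in>{1..n}. bracketK i ^ ((card (UNIV :: 'a set)) ^ (n - i)))"

definition carlitz_e :: "nat \<Rightarrow> 'a::{finite,field} fls \<Rightarrow> 'a fls" where
  "carlitz_e n x = (\<Prod>m\<in>{m::'a poly. degree m < n}. x - fps_to_fls (fps_of_poly m))"

definition carlitzE :: "nat \<Rightarrow> 'a::{finite,field} fls \<Rightarrow> 'a fls" where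
  "carlitzE n x = (if n = 0 then x else carlitz_e n x / carlitzF n)"

definition hasseD :: "nat \<Rightarrow> 'a::{finite,field} fls \<Rightarrow> 'a fls" where
  "hasseD n x = fps_to_fls (Abs_fps (\<lambda>k. of_nat ((k + n) choose n) * fls_nth x (int (k + n))))"

definition qdigit :: "'a::{finite,field} itself \<Rightarrow> nat \<Rightarrow> nat \<Rightarrow> nat" where
  "qdigit _ j i = (j div (card (UNIV :: 'a set)) ^ i) mod (card (UNIV :: 'a set))"

text \<open>G_j = prod_n E_n^{alpha_n}; digits with index > j vanish, so the product over
  n <= j is the product over the base-q expansion (and is 1 for j = 0).\<close>
definition carlitzG :: "nat \<Rightarrow> 'a::{finite,field} fls \<Rightarrow> 'a fls" where
  "carlitzG j x = (\<Prod>n\<in>{..j}. carlitzE n x ^ qdigit TYPE('a) j n)"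

definition digitD :: "nat \<Rightarrow> 'a::{finite,field} fls \<Rightarrow> 'a fls" where
  "digitD j x = (\<Prod>n\<in>{..j}. hasseD n x ^ qdigit TYPE('a) j n)"

end

(* Reduced modulo T, the Carlitz polynomial E_n sends x in O to E_n(T^n) x_n, where x_n is the
   n-th T-adic digit of x and E_n(T^n) = e_n(T^n) / F_n is a unit: numerator and denominator
   both have valuation 1 + q + ... + q^(n-1). The Hasse derivative D_n sends x to x_n. Hence
   G_j = u_j D_j + O(T) uniformly on O, with units u_j.

   The theorem then follows from a perturbation principle: if (b_n) is an orthonormal basis of
   C(O,K) with values in O and |c_n - b_n| <= 1/q on O, then (c_n) is an orthonormal basis.
   Indeed a |-> sum a_n c_n differs from the isometry a |-> sum a_n b_n by an operator of norm
   at most 1/q, so it is isometric by the ultrametric inequality and onto by successive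
   approximation. Norms are handled through valuations: |x| <= q^(-k) iff v(x) >= k. *)

theory Submission
  imports Defs "HOL-Library.Cardinality"
begin

section \<open>Valuations and the absolute value\<close>

definition val_ge :: "'a::zero fls \<Rightarrow> int \<Rightarrow> bool" where
  "val_ge x k \<longleftrightarrow> (\<forall>i<k. fls_nth x i = 0)"

lemma val_ge_iff_subdegree: "val_ge x k \<longleftrightarrow> x = 0 \<or> k \<le> fls_subdegree x"
  by (cases "x = 0") (auto simp: val_ge_def intro: fls_subdegree_geI)

lemma val_ge_0 [simp]: "val_ge 0 k"
  by (simp add: val_ge_def)

lemma val_ge_mono: "val_ge x k \<Longrightarrow> j \<le> k \<Longrightarrow> val_ge x j"
  by (auto simp: val_ge_def)

lemma val_ge_add: "val_ge x k \<Longrightarrow> val_ge y k \<Longrightarrow> val_ge (x + y) k"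
  by (auto simp: val_ge_def)

lemma val_ge_minus [simp]: "val_ge (- x :: 'a::ab_group_add fls) k \<longleftrightarrow> val_ge x k"
  by (auto simp: val_ge_def)

lemma val_ge_diff: "val_ge x k \<Longrightarrow> val_ge y k \<Longrightarrow> val_ge (x - y :: 'a::ab_group_add fls) k"
  by (auto simp: val_ge_def)

lemma val_ge_diff_commute: "val_ge (x - y :: 'a::ab_group_add fls) k \<longleftrightarrow> val_ge (y - x) k"
  by (metis minus_diff_eq val_ge_minus)

lemma val_ge_sum: "(\<And>i. i \<in> A \<Longrightarrow> val_ge (f i) k) \<Longrightarrow> val_ge (\<Sum>i\<in>A. f i :: 'a::comm_monoid_add fls) k"
  by (induction A rule: infinite_finite_induct) (auto intro: val_ge_add)

lemma val_ge_mult: "val_ge x j \<Longrightarrow> val_ge y k \<Longrightarrow> val_ge (x * y :: 'a::idom fls) (j + k)"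
  by (cases "x = 0"; cases "y = 0") (auto simp: val_ge_iff_subdegree)

lemma val_ge_all_imp_0: "(\<And>k. val_ge x k) \<Longrightarrow> x = 0"
  by (metis val_ge_iff_subdegree add_le_same_cancel1 not_one_le_zero)

lemma OK_iff_val_ge: "x \<in> OK \<longleftrightarrow> val_ge x 0"
  by (auto simp: OK_def val_ge_iff_subdegree)

lemma one_less_CARD_field: "1 < CARD('a::{finite,field})"
proof -
  have "card {0::'a, 1} \<le> CARD('a)"
    by (rule card_mono) auto
  thus ?thesis by simp
qed

lemma absK_0 [simp]: "absK 0 = 0"
  by (simp add: absK_def)

lemma absK_eq_0_iff [simp]: "absK (x::'a::{finite,field} fls) = 0 \<longleftrightarrow> x = 0"
  using one_less_CARD_field[where 'a='a] by (simp add: absK_def)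

lemma absK_nonneg: "0 \<le> absK x"
  by (simp add: absK_def)

lemma power_int_le_iff_exp: "1 < (a::real) \<Longrightarrow> a powi m \<le> a powi n \<longleftrightarrow> m \<le> n"
  by (meson linorder_not_le power_int_increasing power_int_strict_increasing less_imp_le)

lemma absK_le_iff_val_ge:
  "absK (x::'a::{finite,field} fls) \<le> real CARD('a) powi (- k) \<longleftrightarrow> val_ge x k"
  using one_less_CARD_field[where 'a='a]
  by (cases "x = 0") (auto simp: absK_def val_ge_iff_subdegree power_int_le_iff_exp)

lemma ex_power_less: "0 < e \<Longrightarrow> \<exists>k::int. real CARD('a::{finite,field}) powi (- k) < e"
proof -
  assume e: "0 < e"
  have q: "1 < real CARD('a)" using one_less_CARD_field[where 'a='a] by simp
  obtain n :: nat where "(1 / real CARD('a)) ^ n < e"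
    using real_arch_pow_inv[OF e, of "1 / real CARD('a)"] q by auto
  hence "real CARD('a) powi (- int n) < e"
    by (simp add: power_int_minus power_one_over inverse_eq_divide)
  thus ?thesis by blast
qed

section \<open>Null sequences and convergent series in F_q((T))\<close>

definition null_seq :: "(nat \<Rightarrow> 'a::zero fls) \<Rightarrow> bool" where
  "null_seq a \<longleftrightarrow> (\<forall>k. \<exists>N. \<forall>n\<ge>N. val_ge (a n) k)"

lemma absK_tendsto_0_iff:
  "(\<lambda>n. absK (a n :: 'a::{finite,field} fls)) \<longlonglongrightarrow> 0 \<longleftrightarrow> null_seq a"
proof
  assume lim: "(\<lambda>n. absK (a n)) \<longlonglongrightarrow> 0"
  show "null_seq a" unfolding null_seq_def
  proof
    fix k :: int
    have "0 < real CARD('a) powi (- k)" using one_less_CARD_field[where 'a='a] by simp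
    then obtain N where "\<forall>n\<ge>N. norm (absK (a n) - 0) < real CARD('a) powi (- k)"
      using lim LIMSEQ_D by blast
    thus "\<exists>N. \<forall>n\<ge>N. val_ge (a n) k"
      by (metis absK_le_iff_val_ge abs_of_nonneg absK_nonneg diff_zero less_imp_le real_norm_def)
  qed
next
  assume null: "null_seq a"
  show "(\<lambda>n. absK (a n)) \<longlonglongrightarrow> 0"
  proof (rule LIMSEQ_I)
    fix r :: real assume "0 < r"
    then obtain k where k: "real CARD('a) powi (- k) < r" using ex_power_less by blast
    obtain N where N: "\<forall>n\<ge>N. val_ge (a n) k" using null unfolding null_seq_def by blast
    have "norm (absK (a n) - 0) < r" if "N \<le> n" for n
    proof -
      have "absK (a n) \<le> real CARD('a) powi (- k)" using N that absK_le_iff_val_ge by blast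
      thus ?thesis using k absK_nonneg[of "a n"] by simp
    qed
    thus "\<exists>N. \<forall>n\<ge>N. norm (absK (a n) - 0) < r" by blast
  qed
qed

lemma null_seq_lower_bound:
  assumes "null_seq a"
  obtains k where "\<And>n. val_ge (a n) k"
proof -
  obtain N where N: "\<forall>n\<ge>N. val_ge (a n) 0" using assms unfolding null_seq_def by blast
  define k where "k = min 0 (Min ((\<lambda>n. fls_subdegree (a n)) ` {..<N}))"
  have "val_ge (a n) k" for n
  proof (cases "n < N")
    case True
    thus ?thesis by (simp add: k_def val_ge_iff_subdegree min_le_iff_disj)
  next
    case False
    thus ?thesis using N val_ge_mono[of "a n" 0 k] by (simp add: k_def)
  qed
  thus ?thesis by (rule that)
qed

lemma null_seq_diff:
  "null_seq (a :: nat \<Rightarrow> 'a::ab_group_add fls) \<Longrightarrow> null_seq b \<Longrightarrow> null_seq (\<lambda>n. a n - b n)"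
  unfolding null_seq_def
proof (intro allI)
  fix k assume "\<forall>k. \<exists>N. \<forall>n\<ge>N. val_ge (a n) k" "\<forall>k. \<exists>N. \<forall>n\<ge>N. val_ge (b n) k"
  then obtain N1 N2 where "\<forall>n\<ge>N1. val_ge (a n) k" "\<forall>n\<ge>N2. val_ge (b n) k" by blast
  hence "\<forall>n\<ge>max N1 N2. val_ge (a n - b n) k" by (simp add: val_ge_diff)
  thus "\<exists>N. \<forall>n\<ge>N. val_ge (a n - b n) k" by blast
qed

lemma null_seq_sum:
  assumes "\<And>i. i \<in> I \<Longrightarrow> null_seq (a i :: nat \<Rightarrow> 'a::comm_monoid_add fls)"
  shows "null_seq (\<lambda>n. \<Sum>i\<in>I. a i n)"
  unfolding null_seq_def
proof
  fix k
  show "\<exists>N. \<forall>n\<ge>N. val_ge (\<Sum>i\<in>I. a i n) k"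
  proof (cases "finite I")
    case True
    have "\<forall>i\<in>I. \<exists>N. \<forall>n\<ge>N. val_ge (a i n) k" using assms unfolding null_seq_def by blast
    then obtain N where N: "\<And>i n. i \<in> I \<Longrightarrow> N i \<le> n \<Longrightarrow> val_ge (a i n) k" by metis
    have "val_ge (\<Sum>i\<in>I. a i n) k" if "Max (insert 0 (N ` I)) \<le> n" for n
      using that True by (intro val_ge_sum N) auto
    thus ?thesis by blast
  qed simp
qed

lemma partial_sums_stable:
  fixes x :: "nat \<Rightarrow> 'a::comm_monoid_add fls"
  assumes "\<forall>n\<ge>A. val_ge (x n) k" "A \<le> B" "i < k"
  shows "fls_nth (\<Sum>n<B. x n) i = fls_nth (\<Sum>n<A. x n) i"
proof -
  have "(\<Sum>n<B. x n) = (\<Sum>n<A. x n) + (\<Sum>n\<in>{A..<B}. x n)"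
    using assms(2) by (simp add: lessThan_atLeast0 sum.atLeastLessThan_concat)
  moreover have "val_ge (\<Sum>n\<in>{A..<B}. x n) k"
    using assms(1) by (intro val_ge_sum) auto
  ultimately show ?thesis using assms(3) by (simp add: val_ge_def)
qed

lemma null_seq_summable:
  fixes x :: "nat \<Rightarrow> 'a::ab_group_add fls"
  assumes null: "null_seq x"
  shows "\<exists>s. \<forall>k N. (\<forall>n\<ge>N. val_ge (x n) k) \<longrightarrow> val_ge (s - (\<Sum>n<N. x n)) k"
proof -
  define M where "M i = (LEAST N. \<forall>n\<ge>N. val_ge (x n) (i + 1))" for i
  have M: "\<forall>n\<ge>M i. val_ge (x n) (i + 1)" for i
  proof -
    have "\<exists>N. \<forall>n\<ge>N. val_ge (x n) (i + 1)" using null unfolding null_seq_def by blast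
    thus ?thesis unfolding M_def by (rule LeastI_ex)
  qed
  have M_le: "M i \<le> N" if "\<forall>n\<ge>N. val_ge (x n) (i + 1)" for i N
    unfolding M_def using that by (rule Least_le)
  obtain N0 where N0: "\<forall>n\<ge>N0. val_ge (x n) 0" using null unfolding null_seq_def by blast
  \<comment> \<open>the i-th coefficient of the sum is that of any partial sum beyond M i\<close>
  define f where "f i = fls_nth (\<Sum>n<M i. x n) i" for i
  have f_neg: "f i = fls_nth (\<Sum>n<N0. x n) i" if "i < 0" for i
  proof -
    have "\<forall>n\<ge>N0. val_ge (x n) (i + 1)" using N0 that by (auto intro: val_ge_mono)
    hence "M i \<le> N0" by (rule M_le)
    thus ?thesis unfolding f_def by (intro partial_sums_stable[OF M, symmetric]) simp_all
  qed
  have "\<forall>\<^sub>\<infinity>n::nat. fls_nth (\<Sum>n<N0. x n) (- int n) = 0"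
    by (rule MOST_fls_neg_nth_eq_0)
  moreover have "\<forall>\<^sub>\<infinity>n::nat. n \<noteq> 0"
    by (simp add: MOST_nat)
  ultimately have "\<forall>\<^sub>\<infinity>n::nat. f (- int n) = 0"
    by (rule eventually_elim2) (simp add: f_neg)
  hence nth_s: "fls_nth (Abs_fls f) i = f i" for i by simp
  have "val_ge (Abs_fls f - (\<Sum>n<N. x n)) k" if h: "\<forall>n\<ge>N. val_ge (x n) k" for k N
    unfolding val_ge_def
  proof safe
    fix i assume "i < k"
    have "fls_nth (\<Sum>n<max (M i) N. x n) i = f i"
      unfolding f_def by (rule partial_sums_stable[OF M]) simp_all
    moreover have "fls_nth (\<Sum>n<max (M i) N. x n) i = fls_nth (\<Sum>n<N. x n) i"
      by (rule partial_sums_stable[OF h]) (simp_all add: \<open>i < k\<close>)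
    ultimately show "fls_nth (Abs_fls f - (\<Sum>n<N. x n)) i = 0" by (simp add: nth_s)
  qed
  thus ?thesis by blast
qed

definition fls_suminf :: "(nat \<Rightarrow> 'a::ab_group_add fls) \<Rightarrow> 'a fls" where
  "fls_suminf x = (SOME s. \<forall>k N. (\<forall>n\<ge>N. val_ge (x n) k) \<longrightarrow> val_ge (s - (\<Sum>n<N. x n)) k)"

lemma fls_suminf_approx:
  assumes "null_seq x" "\<forall>n\<ge>N. val_ge (x n) k"
  shows "val_ge (fls_suminf x - (\<Sum>n<N. x n)) k"
  using someI_ex[OF null_seq_summable[OF assms(1)]] assms(2) unfolding fls_suminf_def by blast

section \<open>Continuous functions on O\<close>

definition trunc_fls :: "nat \<Rightarrow> 'a::zero fls \<Rightarrow> 'a fls" where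
  "trunc_fls n x = Abs_fls (\<lambda>i. if 0 \<le> i \<and> i < int n then fls_nth x i else 0)"

lemma trunc_fls_nth: "fls_nth (trunc_fls n x) i = (if 0 \<le> i \<and> i < int n then fls_nth x i else 0)"
proof -
  have "\<forall>\<^sub>\<infinity>m::nat. (if 0 \<le> - int m \<and> - int m < int n then fls_nth x (- int m) else 0) = 0"
    by (simp add: MOST_nat)
  thus ?thesis unfolding trunc_fls_def by simp
qed

definition low_polys :: "nat \<Rightarrow> 'a::zero fls set" where
  "low_polys n = {y. \<forall>i. (i < 0 \<or> int n \<le> i) \<longrightarrow> fls_nth y i = 0}"

lemma trunc_fls_in_low_polys: "trunc_fls n x \<in> low_polys n"
  by (simp add: low_polys_def trunc_fls_nth)

lemma val_ge_sub_trunc_fls: "x \<in> OK \<Longrightarrow> val_ge (x - trunc_fls n x) (int n)"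
  by (auto simp: OK_iff_val_ge val_ge_def trunc_fls_nth)

lemma finite_low_polys: "finite (low_polys n :: 'a::{finite,zero} fls set)"
proof (rule finite_imageD)
  let ?coeffs = "\<lambda>y::'a fls. restrict (fls_nth y) {0..<int n}"
  show "inj_on ?coeffs (low_polys n)"
  proof (rule inj_onI, rule fls_eqI)
    fix y z i assume "y \<in> low_polys n" "z \<in> low_polys n" "?coeffs y = ?coeffs z"
    thus "fls_nth y i = fls_nth z i"
      by (cases "0 \<le> i \<and> i < int n") (auto simp: low_polys_def dest: fun_cong[of _ _ i])
  qed
  have "?coeffs ` low_polys n \<subseteq> PiE {0..<int n} (\<lambda>_. UNIV)" by auto
  thus "finite (?coeffs ` low_polys n)" by (rule finite_subset) (simp add: finite_PiE)
qed

lemma low_polys_OK: "y \<in> low_polys n \<Longrightarrow> y \<in> OK"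
  by (auto simp: low_polys_def OK_iff_val_ge val_ge_def)

lemma CK_continuous_at:
  assumes "f \<in> CK" "z \<in> OK"
  obtains n :: nat where "\<And>y. y \<in> OK \<Longrightarrow> val_ge (y - z) (int n) \<Longrightarrow> val_ge (f y - f z) k"
proof -
  have q: "1 < real CARD('a)" using one_less_CARD_field[where 'a='a] by simp
  hence "0 < real CARD('a) powi (- k)" by simp
  then obtain d where d: "0 < d" "\<forall>y\<in>OK. absK (y - z) < d \<longrightarrow> absK (f y - f z) < real CARD('a) powi (- k)"
    using assms unfolding CK_def by blast
  obtain k' where k': "real CARD('a) powi (- k') < d" using ex_power_less[OF d(1)] by blast
  show ?thesis
  proof (rule that[of "nat k'"])
    fix y assume y: "y \<in> OK" "val_ge (y - z) (int (nat k'))"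
    have "absK (y - z) \<le> real CARD('a) powi (- int (nat k'))" using y(2) absK_le_iff_val_ge by blast
    also have "\<dots> \<le> real CARD('a) powi (- k')" using q by (simp add: power_int_le_iff_exp)
    finally have "absK (f y - f z) < real CARD('a) powi (- k)" using d(2) k' y(1) by auto
    thus "val_ge (f y - f z) k" using absK_le_iff_val_ge less_imp_le by blast
  qed
qed

definition unif_cont_ball :: "('a::{finite,field} fls \<Rightarrow> 'a fls) \<Rightarrow> int \<Rightarrow> 'a fls \<Rightarrow> nat \<Rightarrow> bool" where
  "unif_cont_ball f k z n \<longleftrightarrow> (\<exists>m. \<forall>x\<in>OK. \<forall>y\<in>OK. val_ge (x - z) (int n) \<longrightarrow> val_ge (y - z) (int n)
      \<longrightarrow> val_ge (x - y) m \<longrightarrow> val_ge (f x - f y) k)"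

lemma unif_cont_ball_recenter:
  assumes "val_ge (z - z') (int n)" "unif_cont_ball f k z n"
  shows "unif_cont_ball f k z' n"
proof -
  have "val_ge (x - z) (int n)" if "val_ge (x - z') (int n)" for x
    using val_ge_diff[OF that assms(1)] by simp
  thus ?thesis using assms(2) unfolding unif_cont_ball_def by meson
qed

lemma unif_cont_ball_if_children:
  assumes "\<And>a. unif_cont_ball f k (z + fls_const a * fls_X ^ n) (Suc n)"
  shows "unif_cont_ball f k z n"
proof -
  have "\<forall>a. \<exists>m. \<forall>x\<in>OK. \<forall>y\<in>OK. val_ge (x - (z + fls_const a * fls_X ^ n)) (int (Suc n))
      \<longrightarrow> val_ge (y - (z + fls_const a * fls_X ^ n)) (int (Suc n)) \<longrightarrow> val_ge (x - y) m
      \<longrightarrow> val_ge (f x - f y) k"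
    using assms unfolding unif_cont_ball_def by blast
  then obtain m where m: "\<forall>a. \<forall>x\<in>OK. \<forall>y\<in>OK. val_ge (x - (z + fls_const a * fls_X ^ n)) (int (Suc n))
      \<longrightarrow> val_ge (y - (z + fls_const a * fls_X ^ n)) (int (Suc n)) \<longrightarrow> val_ge (x - y) (m a)
      \<longrightarrow> val_ge (f x - f y) k"
    by (rule choice[THEN exE])
  define M where "M = max (int (Suc n)) (Max (range m))"
  have "val_ge (f x - f y) k"
    if xy: "x \<in> OK" "y \<in> OK" "val_ge (x - z) (int n)" "val_ge (y - z) (int n)" "val_ge (x - y) M" for x y
  proof -
    define a where "a = fls_nth (x - z) (int n)"
    have x_child: "val_ge (x - (z + fls_const a * fls_X ^ n)) (int (Suc n))"
      using xy(3) by (auto simp: val_ge_def a_def less_Suc_eq)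
    have "val_ge (x - y) (int (Suc n))" using xy(5) by (rule val_ge_mono) (simp add: M_def)
    from val_ge_diff[OF x_child this]
    have "val_ge (y - (z + fls_const a * fls_X ^ n)) (int (Suc n))" by (simp add: algebra_simps)
    moreover have "val_ge (x - y) (m a)" using xy(5) by (rule val_ge_mono) (simp add: M_def le_max_iff_disj)
    ultimately show ?thesis using m xy(1,2) x_child by blast
  qed
  thus ?thesis unfolding unif_cont_ball_def by blast
qed

text \<open>Koenig's lemma on the q-ary tree of balls: keep descending into a sub-ball on which
  uniform continuity still fails; the balls shrink to a point of O.\<close>

lemma not_unif_cont_ball_point:
  assumes "\<not> unif_cont_ball f k 0 0"
  obtains z where "z \<in> OK" "\<And>n. \<not> unif_cont_ball f k z n"
proof -
  define child where "child n z =
    z + fls_const (SOME a. \<not> unif_cont_ball f k (z + fls_const a * fls_X ^ n) (Suc n)) * fls_X ^ n" for n z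
  define zz where "zz = rec_nat 0 child"
  have zz_0: "zz 0 = 0" and zz_Suc: "zz (Suc n) = child n (zz n)" for n
    by (simp_all add: zz_def)
  have bad: "\<not> unif_cont_ball f k (zz n) n" for n
  proof (induction n)
    case 0 thus ?case using assms by (simp add: zz_0)
  next
    case (Suc n)
    hence "\<exists>a. \<not> unif_cont_ball f k (zz n + fls_const a * fls_X ^ n) (Suc n)"
      using unif_cont_ball_if_children by blast
    thus ?case unfolding zz_Suc child_def by (rule someI_ex)
  qed
  define step where "step n = zz (Suc n) - zz n" for n
  have step: "val_ge (step i) (int n)" if "n \<le> i" for n i
    using that by (auto simp: step_def zz_Suc child_def val_ge_def)
  have null: "null_seq step" unfolding null_seq_def
  proof
    fix k :: int
    have "val_ge (step i) k" if "nat k \<le> i" for i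
      using step[OF that] by (rule val_ge_mono) simp
    thus "\<exists>N. \<forall>i\<ge>N. val_ge (step i) k" by blast
  qed
  define z where "z = fls_suminf step"
  have close: "val_ge (z - zz n) (int n)" for n
    using fls_suminf_approx[OF null, of n] step sum_lessThan_telescope[of zz n]
    by (simp add: z_def step_def zz_0)
  show ?thesis
  proof (rule that)
    show "z \<in> OK" using close[of 0] by (simp add: zz_0 OK_iff_val_ge)
    show "\<not> unif_cont_ball f k z n" for n
      using bad unif_cont_ball_recenter[OF close] by blast
  qed
qed

lemma CK_uniformly_continuous:
  assumes f: "f \<in> CK"
  shows "\<exists>m. \<forall>x\<in>OK. \<forall>y\<in>OK. val_ge (x - y) m \<longrightarrow> val_ge (f x - f y) k"
proof -
  have "unif_cont_ball f k 0 0"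
  proof (rule ccontr)
    assume "\<not> unif_cont_ball f k 0 0"
    then obtain z where z: "z \<in> OK" "\<And>n. \<not> unif_cont_ball f k z n"
      by (rule not_unif_cont_ball_point) blast
    obtain n where n: "\<And>y. y \<in> OK \<Longrightarrow> val_ge (y - z) (int n) \<Longrightarrow> val_ge (f y - f z) k"
      using CK_continuous_at[OF f z(1)] by blast
    have "val_ge (f x - f y) k" if "x \<in> OK" "y \<in> OK" "val_ge (x - z) (int n)" "val_ge (y - z) (int n)" for x y
      using val_ge_diff[OF n n] that by simp
    hence "unif_cont_ball f k z n" unfolding unif_cont_ball_def by blast
    thus False using z(2) by blast
  qed
  thus ?thesis by (simp add: unif_cont_ball_def OK_iff_val_ge)
qed

lemma CK_iff_uniformly_continuous:
  "f \<in> CK \<longleftrightarrow> (\<forall>k. \<exists>m. \<forall>x\<in>OK. \<forall>y\<in>OK. val_ge (x - y) m \<longrightarrow> val_ge (f x - f y) k)"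
proof
  assume unif: "\<forall>k. \<exists>m. \<forall>x\<in>OK. \<forall>y\<in>OK. val_ge (x - y) m \<longrightarrow> val_ge (f x - f y) k"
  show "f \<in> CK" unfolding CK_def
  proof safe
    fix x :: "'a fls" and e :: real assume x: "x \<in> OK" and e: "0 < e"
    obtain k where k: "real CARD('a) powi (- k) < e" using ex_power_less[OF e] by blast
    obtain m where m: "\<forall>x\<in>OK. \<forall>y\<in>OK. val_ge (x - y) m \<longrightarrow> val_ge (f x - f y) k"
      using unif by blast
    show "\<exists>d>0. \<forall>y\<in>OK. absK (y - x) < d \<longrightarrow> absK (f y - f x) < e"
    proof (intro exI conjI ballI impI)
      show "0 < real CARD('a) powi (- m)" using one_less_CARD_field[where 'a='a] by simp
      fix y assume y: "y \<in> OK" "absK (y - x) < real CARD('a) powi (- m)"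
      hence "val_ge (f y - f x) k" using m x absK_le_iff_val_ge less_imp_le by blast
      hence "absK (f y - f x) \<le> real CARD('a) powi (- k)" using absK_le_iff_val_ge by blast
      thus "absK (f y - f x) < e" using k by linarith
    qed
  qed
qed (use CK_uniformly_continuous in blast)

lemma CK_const: "(\<lambda>t. c) \<in> CK"
  by (simp add: CK_iff_uniformly_continuous)

lemma CK_id: "(\<lambda>t. t) \<in> CK"
  by (auto simp: CK_iff_uniformly_continuous)

lemma CK_add:
  assumes "f \<in> CK" "g \<in> CK"
  shows "(\<lambda>t. f t + g t) \<in> CK"
  unfolding CK_iff_uniformly_continuous
proof
  fix k
  obtain m1 m2 where
    m1: "\<forall>x\<in>OK. \<forall>y\<in>OK. val_ge (x - y) m1 \<longrightarrow> val_ge (f x - f y) k" and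
    m2: "\<forall>x\<in>OK. \<forall>y\<in>OK. val_ge (x - y) m2 \<longrightarrow> val_ge (g x - g y) k"
    using assms unfolding CK_iff_uniformly_continuous by meson
  have "val_ge (f x + g x - (f y + g y)) k" if "x \<in> OK" "y \<in> OK" "val_ge (x - y) (max m1 m2)" for x y
  proof -
    have "val_ge (x - y) m1" "val_ge (x - y) m2"
      using that(3) val_ge_mono max.cobounded1 max.cobounded2 by blast+
    hence "val_ge (f x - f y) k" "val_ge (g x - g y) k"
      using m1 m2 that(1,2) by blast+
    from val_ge_add[OF this] show ?thesis by (simp add: algebra_simps)
  qed
  thus "\<exists>m. \<forall>x\<in>OK. \<forall>y\<in>OK. val_ge (x - y) m \<longrightarrow> val_ge (f x + g x - (f y + g y)) k" by blast
qed

lemma CK_uminus: "f \<in> CK \<Longrightarrow> (\<lambda>t. - f t) \<in> CK"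
  by (simp add: CK_iff_uniformly_continuous val_ge_diff_commute)

lemma CK_diff: "f \<in> CK \<Longrightarrow> g \<in> CK \<Longrightarrow> (\<lambda>t. f t - g t) \<in> CK"
  using CK_add[OF _ CK_uminus] by simp

lemma CK_sum: "(\<And>i. i \<in> A \<Longrightarrow> f i \<in> CK) \<Longrightarrow> (\<lambda>t. \<Sum>i\<in>A. f i t) \<in> CK"
  by (induction A rule: infinite_finite_induct) (auto simp: CK_const intro: CK_add)

lemma CK_val_lower_bound:
  assumes "f \<in> CK"
  obtains k where "\<And>t. t \<in> OK \<Longrightarrow> val_ge (f t) k"
proof -
  obtain m where m: "\<forall>x\<in>OK. \<forall>y\<in>OK. val_ge (x - y) m \<longrightarrow> val_ge (f x - f y) 0"
    using CK_uniformly_continuous[OF assms] by blast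
  define n where "n = nat m"
  define k where "k = min 0 (Min ((\<lambda>y. fls_subdegree (f y)) ` low_polys n))"
  have "val_ge (f t) k" if t: "t \<in> OK" for t
  proof -
    have y: "trunc_fls n t \<in> low_polys n" by (rule trunc_fls_in_low_polys)
    have "Min ((\<lambda>y. fls_subdegree (f y)) ` low_polys n) \<le> fls_subdegree (f (trunc_fls n t))"
      by (rule Min_le) (use finite_low_polys y in auto)
    hence "k \<le> fls_subdegree (f (trunc_fls n t))" by (simp add: k_def min_le_iff_disj)
    hence "val_ge (f (trunc_fls n t)) k" by (simp add: val_ge_iff_subdegree)
    moreover have "val_ge (t - trunc_fls n t) m"
      using val_ge_sub_trunc_fls[OF t, of n] by (rule val_ge_mono) (simp add: n_def)
    hence "val_ge (f t - f (trunc_fls n t)) 0"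
      using m t low_polys_OK[OF y] by blast
    hence "val_ge (f t - f (trunc_fls n t)) k" by (rule val_ge_mono) (simp add: k_def)
    ultimately show ?thesis using val_ge_add by fastforce
  qed
  thus ?thesis by (rule that)
qed

lemma CK_mult:
  assumes f: "f \<in> CK" and g: "g \<in> CK"
  shows "(\<lambda>t. f t * g t) \<in> CK"
  unfolding CK_iff_uniformly_continuous
proof
  fix k
  obtain kf kg where kf: "\<And>t. t \<in> OK \<Longrightarrow> val_ge (f t) kf" and kg: "\<And>t. t \<in> OK \<Longrightarrow> val_ge (g t) kg"
    using CK_val_lower_bound f g by metis
  obtain m1 m2 where
    m1: "\<forall>x\<in>OK. \<forall>y\<in>OK. val_ge (x - y) m1 \<longrightarrow> val_ge (f x - f y) (k - kg)" and
    m2: "\<forall>x\<in>OK. \<forall>y\<in>OK. val_ge (x - y) m2 \<longrightarrow> val_ge (g x - g y) (k - kf)"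
    using f g unfolding CK_iff_uniformly_continuous by meson
  have "val_ge (f x * g x - f y * g y) k"
    if "x \<in> OK" "y \<in> OK" "val_ge (x - y) (max m1 m2)" for x y
  proof -
    have "val_ge (f x * (g x - g y)) (kf + (k - kf))"
      using that by (intro val_ge_mult kf m2[rule_format]) (auto intro: val_ge_mono)
    moreover have "val_ge ((f x - f y) * g y) ((k - kg) + kg)"
      using that by (intro val_ge_mult kg m1[rule_format]) (auto intro: val_ge_mono)
    ultimately have "val_ge (f x * (g x - g y) + (f x - f y) * g y) k"
      by (simp add: val_ge_add)
    thus ?thesis by (simp add: algebra_simps)
  qed
  thus "\<exists>m. \<forall>x\<in>OK. \<forall>y\<in>OK. val_ge (x - y) m \<longrightarrow> val_ge (f x * g x - f y * g y) k" by blast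
qed

lemma CK_prod: "(\<And>i. i \<in> A \<Longrightarrow> f i \<in> CK) \<Longrightarrow> (\<lambda>t. \<Prod>i\<in>A. f i t) \<in> CK"
  by (induction A rule: infinite_finite_induct) (auto simp: CK_const intro: CK_mult)

lemma CK_power: "f \<in> CK \<Longrightarrow> (\<lambda>t. f t ^ n) \<in> CK"
  using CK_prod[of "{..<n}" "\<lambda>_. f"] by simp

lemma CK_uniform_limit:
  assumes "\<And>N. P N \<in> CK" "\<And>k. \<exists>N. \<forall>t\<in>OK. val_ge (g t - P N t) k"
  shows "g \<in> CK"
  unfolding CK_iff_uniformly_continuous
proof
  fix k
  obtain N where N: "\<forall>t\<in>OK. val_ge (g t - P N t) k" using assms(2) by blast
  obtain m where m: "\<forall>x\<in>OK. \<forall>y\<in>OK. val_ge (x - y) m \<longrightarrow> val_ge (P N x - P N y) k"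
    using assms(1) unfolding CK_iff_uniformly_continuous by blast
  have "val_ge (g x - g y) k" if "x \<in> OK" "y \<in> OK" "val_ge (x - y) m" for x y
  proof -
    have "val_ge (g x - P N x) k" "val_ge (P N x - P N y) k" "val_ge (g y - P N y) k"
      using N m that by auto
    from val_ge_diff[OF val_ge_add[OF this(1,2)] this(3)] show ?thesis by simp
  qed
  thus "\<exists>m. \<forall>x\<in>OK. \<forall>y\<in>OK. val_ge (x - y) m \<longrightarrow> val_ge (g x - g y) k" by blast
qed

lemma supnorm_le: "(\<And>t. t \<in> OK \<Longrightarrow> absK (f t) \<le> B) \<Longrightarrow> supnorm f \<le> B"
  unfolding supnorm_def by (rule cSUP_least) (auto simp: OK_def)

lemma absK_le_supnorm:
  assumes "f \<in> CK" "t \<in> OK"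
  shows "absK (f t) \<le> supnorm f"
proof -
  obtain k where "\<And>t. t \<in> OK \<Longrightarrow> val_ge (f t) k" using CK_val_lower_bound[OF assms(1)] by blast
  hence "\<And>t. t \<in> OK \<Longrightarrow> absK (f t) \<le> real CARD('a) powi (- k)" using absK_le_iff_val_ge by blast
  hence "bdd_above ((\<lambda>t. absK (f t)) ` OK)" by (rule bdd_aboveI2)
  thus ?thesis unfolding supnorm_def using assms(2) by (rule cSUP_upper2) simp
qed

lemma supnorm_le_iff_val_ge:
  assumes "f \<in> CK"
  shows "supnorm f \<le> real CARD('a::{finite,field}) powi (- k) \<longleftrightarrow> (\<forall>t\<in>OK. val_ge (f t :: 'a fls) k)"
  using absK_le_supnorm[OF assms] supnorm_le[of f] absK_le_iff_val_ge by (meson order_trans)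

section \<open>Expansions and orthonormal bases in valuation form\<close>

definition has_expansion ::
    "(nat \<Rightarrow> 'a::{finite,field} fls) \<Rightarrow> (nat \<Rightarrow> 'a fls \<Rightarrow> 'a fls) \<Rightarrow> ('a fls \<Rightarrow> 'a fls) \<Rightarrow> bool" where
  "has_expansion a b f \<longleftrightarrow> (\<forall>k. \<exists>N0. \<forall>N\<ge>N0. \<forall>t\<in>OK. val_ge (f t - (\<Sum>n<N. a n * b n t)) k)"

lemma series_rep_iff_has_expansion:
  assumes f: "f \<in> CK" and b: "\<And>n. b n \<in> CK"
  shows "series_rep a b f \<longleftrightarrow> has_expansion a b f"
proof -
  define r where "r N t = f t - (\<Sum>n<N. a n * b n t)" for N t
  have r_CK: "r N \<in> CK" for N
    unfolding r_def[abs_def] by (intro CK_diff f CK_sum CK_mult CK_const b)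
  have r_nonneg: "0 \<le> supnorm (r N)" for N
    using absK_le_supnorm[OF r_CK, of 0 N] absK_nonneg[of "r N 0"] by (simp add: OK_def)
  have q: "0 < real CARD('a) powi (- k)" for k using one_less_CARD_field[where 'a='a] by simp
  show ?thesis
    unfolding series_rep_def has_expansion_def r_def[symmetric]
  proof
    assume lim: "(\<lambda>N. supnorm (r N)) \<longlonglongrightarrow> 0"
    show "\<forall>k. \<exists>N0. \<forall>N\<ge>N0. \<forall>t\<in>OK. val_ge (r N t) k"
    proof
      fix k
      obtain N0 where "\<forall>N\<ge>N0. norm (supnorm (r N) - 0) < real CARD('a) powi (- k)"
        using LIMSEQ_D[OF lim q] by blast
      hence "\<forall>N\<ge>N0. supnorm (r N) \<le> real CARD('a) powi (- k)" by auto
      thus "\<exists>N0. \<forall>N\<ge>N0. \<forall>t\<in>OK. val_ge (r N t) k"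
        using supnorm_le_iff_val_ge[OF r_CK] by blast
    qed
  next
    assume unif: "\<forall>k. \<exists>N0. \<forall>N\<ge>N0. \<forall>t\<in>OK. val_ge (r N t) k"
    show "(\<lambda>N. supnorm (r N)) \<longlonglongrightarrow> 0"
    proof (rule LIMSEQ_I)
      fix e :: real assume "0 < e"
      then obtain k where k: "real CARD('a) powi (- k) < e" using ex_power_less by blast
      obtain N0 where "\<forall>N\<ge>N0. \<forall>t\<in>OK. val_ge (r N t) k" using unif by blast
      hence "\<forall>N\<ge>N0. supnorm (r N) \<le> real CARD('a) powi (- k)"
        using supnorm_le_iff_val_ge[OF r_CK] by blast
      hence "\<forall>N\<ge>N0. norm (supnorm (r N) - 0) < e" using k r_nonneg by fastforce
      thus "\<exists>N0. \<forall>N\<ge>N0. norm (supnorm (r N) - 0) < e" by blast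
    qed
  qed
qed

lemma has_expansion_cong:
  "(\<And>t. t \<in> OK \<Longrightarrow> f t = g t) \<Longrightarrow> has_expansion a b f \<Longrightarrow> has_expansion a b g"
  unfolding has_expansion_def by simp

lemma has_expansion_unique:
  assumes "has_expansion a b f" "has_expansion a b g" "t \<in> OK"
  shows "f t = g t"
proof -
  have "val_ge (f t - g t) k" for k
  proof -
    obtain N1 N2 where
      "\<forall>N\<ge>N1. \<forall>t\<in>OK. val_ge (f t - (\<Sum>n<N. a n * b n t)) k"
      "\<forall>N\<ge>N2. \<forall>t\<in>OK. val_ge (g t - (\<Sum>n<N. a n * b n t)) k"
      using assms(1,2) unfolding has_expansion_def by meson
    hence "val_ge (f t - (\<Sum>n<max N1 N2. a n * b n t)) k" "val_ge (g t - (\<Sum>n<max N1 N2. a n * b n t)) k"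
      using assms(3) by auto
    from val_ge_diff[OF this] show ?thesis by simp
  qed
  thus ?thesis using val_ge_all_imp_0[of "f t - g t"] by simp
qed

lemma has_expansion_add:
  assumes "has_expansion a b f" "has_expansion a' b g"
  shows "has_expansion (\<lambda>n. a n + a' n) b (\<lambda>t. f t + g t)"
  unfolding has_expansion_def
proof
  fix k
  obtain N1 N2 where
    "\<forall>N\<ge>N1. \<forall>t\<in>OK. val_ge (f t - (\<Sum>n<N. a n * b n t)) k"
    "\<forall>N\<ge>N2. \<forall>t\<in>OK. val_ge (g t - (\<Sum>n<N. a' n * b n t)) k"
    using assms unfolding has_expansion_def by meson
  hence "\<forall>N\<ge>max N1 N2. \<forall>t\<in>OK.
      val_ge ((f t - (\<Sum>n<N. a n * b n t)) + (g t - (\<Sum>n<N. a' n * b n t))) k"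
    by (auto intro: val_ge_add)
  hence "\<forall>N\<ge>max N1 N2. \<forall>t\<in>OK. val_ge (f t + g t - (\<Sum>n<N. (a n + a' n) * b n t)) k"
    by (simp add: sum.distrib algebra_simps)
  thus "\<exists>N0. \<forall>N\<ge>N0. \<forall>t\<in>OK. val_ge (f t + g t - (\<Sum>n<N. (a n + a' n) * b n t)) k"
    by blast
qed

lemma has_expansion_minus:
  "has_expansion a b f \<Longrightarrow> has_expansion (\<lambda>n. - a n) b (\<lambda>t. - f t)"
  unfolding has_expansion_def by (simp add: sum_negf val_ge_diff_commute add.commute)

lemma has_expansion_diff:
  "has_expansion a b f \<Longrightarrow> has_expansion a' b g \<Longrightarrow> has_expansion (\<lambda>n. a n - a' n) b (\<lambda>t. f t - g t)"
  using has_expansion_add[OF _ has_expansion_minus] by simp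

lemma has_expansion_0: "has_expansion (\<lambda>n. 0) b (\<lambda>t. 0)"
  by (simp add: has_expansion_def)

lemma has_expansion_sum:
  "(\<And>i. i \<in> I \<Longrightarrow> has_expansion (a i) b (f i))
    \<Longrightarrow> has_expansion (\<lambda>n. \<Sum>i\<in>I. a i n) b (\<lambda>t. \<Sum>i\<in>I. f i t)"
  by (induction I rule: infinite_finite_induct) (auto simp: has_expansion_0 intro: has_expansion_add)

lemma has_expansion_diff_basis:
  assumes "has_expansion a b f" "has_expansion a d g"
  shows "has_expansion a (\<lambda>n t. b n t - d n t) (\<lambda>t. f t - g t)"
  unfolding has_expansion_def
proof
  fix k
  obtain N1 N2 where
    "\<forall>N\<ge>N1. \<forall>t\<in>OK. val_ge (f t - (\<Sum>n<N. a n * b n t)) k"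
    "\<forall>N\<ge>N2. \<forall>t\<in>OK. val_ge (g t - (\<Sum>n<N. a n * d n t)) k"
    using assms unfolding has_expansion_def by meson
  hence "\<forall>N\<ge>max N1 N2. \<forall>t\<in>OK.
      val_ge ((f t - (\<Sum>n<N. a n * b n t)) - (g t - (\<Sum>n<N. a n * d n t))) k"
    by (auto intro: val_ge_diff)
  hence "\<forall>N\<ge>max N1 N2. \<forall>t\<in>OK. val_ge (f t - g t - (\<Sum>n<N. a n * (b n t - d n t))) k"
    by (simp add: sum_subtractf algebra_simps)
  thus "\<exists>N0. \<forall>N\<ge>N0. \<forall>t\<in>OK. val_ge (f t - g t - (\<Sum>n<N. a n * (b n t - d n t))) k"
    by blast
qed

lemma has_expansion_scale:
  "has_expansion a (\<lambda>n t. u n * b n t) f \<longleftrightarrow> has_expansion (\<lambda>n. a n * u n) b f"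
  unfolding has_expansion_def by (simp add: mult.assoc)

lemma has_expansion_val_ge:
  assumes "has_expansion a b f" "\<And>n t. t \<in> OK \<Longrightarrow> val_ge (b n t) 0" "\<And>n. val_ge (a n) k" "t \<in> OK"
  shows "val_ge (f t) k"
proof -
  obtain N where N: "\<forall>t\<in>OK. val_ge (f t - (\<Sum>n<N. a n * b n t)) k"
    using assms(1) unfolding has_expansion_def by blast
  have "val_ge (\<Sum>n<N. a n * b n t) k"
    using val_ge_mult[OF assms(3) assms(2)[OF assms(4)]] by (intro val_ge_sum) simp
  from val_ge_add[OF N[rule_format, OF assms(4)] this] show ?thesis by simp
qed

definition expansion_fun ::
    "(nat \<Rightarrow> 'a::{finite,field} fls) \<Rightarrow> (nat \<Rightarrow> 'a fls \<Rightarrow> 'a fls) \<Rightarrow> 'a fls \<Rightarrow> 'a fls" where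
  "expansion_fun a b t = fls_suminf (\<lambda>n. a n * b n t)"

context
  fixes a :: "nat \<Rightarrow> 'a::{finite,field} fls" and b :: "nat \<Rightarrow> 'a fls \<Rightarrow> 'a fls" and j :: int
  assumes null: "null_seq a" and b_bounded: "\<And>n t. t \<in> OK \<Longrightarrow> val_ge (b n t) j"
begin

lemma expansion_fun_approx:
  assumes "\<forall>n\<ge>N. val_ge (a n) k" "t \<in> OK"
  shows "val_ge (expansion_fun a b t - (\<Sum>n<N. a n * b n t)) (k + j)"
proof -
  have "null_seq (\<lambda>n. a n * b n t)" unfolding null_seq_def
  proof
    fix k
    obtain N where "\<forall>n\<ge>N. val_ge (a n) (k - j)" using null unfolding null_seq_def by blast
    hence "\<forall>n\<ge>N. val_ge (a n * b n t) k"
      using val_ge_mult[OF _ b_bounded[OF assms(2)]] by fastforce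
    thus "\<exists>N. \<forall>n\<ge>N. val_ge (a n * b n t) k" by blast
  qed
  moreover have "\<forall>n\<ge>N. val_ge (a n * b n t) (k + j)"
    using assms val_ge_mult b_bounded by blast
  ultimately show ?thesis unfolding expansion_fun_def by (rule fls_suminf_approx)
qed

lemma expansion_fun_val_ge: "(\<And>n. val_ge (a n) k) \<Longrightarrow> t \<in> OK \<Longrightarrow> val_ge (expansion_fun a b t) (k + j)"
  using expansion_fun_approx[of 0 k t] by simp

lemma uniform_approx_expansion_fun:
  "\<exists>N. \<forall>t\<in>OK. val_ge (expansion_fun a b t - (\<Sum>n<N. a n * b n t)) k"
proof -
  obtain N where "\<forall>n\<ge>N. val_ge (a n) (k - j)" using null unfolding null_seq_def by blast
  thus ?thesis using expansion_fun_approx[of N "k - j"] by fastforce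
qed

lemma has_expansion_expansion_fun: "has_expansion a b (expansion_fun a b)"
  unfolding has_expansion_def
proof
  fix k
  obtain N0 where "\<forall>n\<ge>N0. val_ge (a n) (k - j)" using null unfolding null_seq_def by blast
  hence "\<forall>N\<ge>N0. \<forall>t\<in>OK. val_ge (expansion_fun a b t - (\<Sum>n<N. a n * b n t)) k"
    using expansion_fun_approx[of _ "k - j"] by fastforce
  thus "\<exists>N0. \<forall>N\<ge>N0. \<forall>t\<in>OK. val_ge (expansion_fun a b t - (\<Sum>n<N. a n * b n t)) k" by blast
qed

lemma expansion_fun_CK: "(\<And>n. b n \<in> CK) \<Longrightarrow> expansion_fun a b \<in> CK"
  by (rule CK_uniform_limit[of "\<lambda>N t. \<Sum>n<N. a n * b n t"])
     (auto intro!: CK_sum CK_mult CK_const uniform_approx_expansion_fun)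

end

definition same_norm :: "(nat \<Rightarrow> 'a::{finite,field} fls) \<Rightarrow> ('a fls \<Rightarrow> 'a fls) \<Rightarrow> bool" where
  "same_norm a f \<longleftrightarrow> (\<forall>k. (\<forall>n. val_ge (a n) k) \<longleftrightarrow> (\<forall>t\<in>OK. val_ge (f t) k))"

lemma null_seq_bdd_absK:
  assumes "null_seq (a :: nat \<Rightarrow> 'a::{finite,field} fls)"
  shows "bdd_above (range (\<lambda>n. absK (a n)))"
proof -
  obtain k0 where "\<And>n. val_ge (a n) k0" using null_seq_lower_bound[OF assms] by blast
  hence "\<And>n. absK (a n) \<le> real CARD('a) powi (- k0)" using absK_le_iff_val_ge by blast
  thus ?thesis by (rule bdd_aboveI2)
qed

lemma SUP_absK_le_iff_val_ge:
  assumes "null_seq (a :: nat \<Rightarrow> 'a::{finite,field} fls)"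
  shows "(SUP n. absK (a n)) \<le> real CARD('a) powi (- k) \<longleftrightarrow> (\<forall>n. val_ge (a n) k)"
proof -
  have "(SUP n. absK (a n)) \<le> real CARD('a) powi (- k) \<longleftrightarrow> (\<forall>n. absK (a n) \<le> real CARD('a) powi (- k))"
      using null_seq_bdd_absK[OF assms] by (simp add: cSUP_le_iff)
  thus ?thesis by (simp add: absK_le_iff_val_ge)
qed

lemma absK_eq_if_val_exact:
  assumes "val_ge (x::'a::{finite,field} fls) k" "\<not> val_ge x (k + 1)"
  shows "absK x = real CARD('a) powi (- k)"
proof -
  have "x \<noteq> 0" using assms(2) by auto
  hence "fls_subdegree x = k" using assms by (auto simp: val_ge_iff_subdegree)
  thus ?thesis using \<open>x \<noteq> 0\<close> by (simp add: absK_def)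
qed

lemma null_seq_exact_level:
  assumes "null_seq a" "a n0 \<noteq> 0"
  obtains k n1 where "\<And>n. val_ge (a n) k" "\<not> val_ge (a n1) (k + 1)"
proof -
  obtain k0 where k0: "\<And>n. val_ge (a n) k0" using null_seq_lower_bound[OF assms(1)] by blast
  define S where "S = {k. k0 \<le> k \<and> (\<forall>n. val_ge (a n) k)}"
  have "S \<subseteq> {k0..fls_subdegree (a n0)}"
    using assms(2) by (auto simp: S_def val_ge_iff_subdegree)
  hence fin: "finite S" by (rule finite_subset) simp
  have "k0 \<in> S" by (simp add: S_def k0)
  define k where "k = Max S"
  have "k \<in> S" unfolding k_def using fin \<open>k0 \<in> S\<close> by (intro Max_in) auto
  moreover have "k + 1 \<notin> S" using Max_ge[OF fin, of "k + 1"] by (auto simp: k_def)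
  ultimately show ?thesis using that by (auto simp: S_def)
qed

lemma supnorm_eq_if_same_norm:
  assumes a: "null_seq a" and f: "f \<in> CK" and same: "same_norm a f"
  shows "supnorm f = (SUP n. absK (a n))"
proof (cases "\<forall>n. a n = 0")
  case True
  hence "\<forall>k. val_ge (f t) k" if "t \<in> OK" for t
    using same that unfolding same_norm_def by simp
  hence "f t = 0" if "t \<in> OK" for t
    using that val_ge_all_imp_0 by blast
  hence "supnorm f = 0"
    using supnorm_le[of f 0] absK_le_supnorm[OF f, of 0] by (force simp: OK_def)
  thus ?thesis using True by simp
next
  case False
  then obtain k n1 where k: "\<And>n. val_ge (a n) k" "\<not> val_ge (a n1) (k + 1)"
    using null_seq_exact_level[OF a] by blast
  then obtain t1 where t1: "t1 \<in> OK" "\<not> val_ge (f t1) (k + 1)" "\<forall>t\<in>OK. val_ge (f t) k"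
    using same unfolding same_norm_def by blast
  have "(SUP n. absK (a n)) = real CARD('a) powi (- k)"
  proof (rule antisym)
    show "(SUP n. absK (a n)) \<le> real CARD('a) powi (- k)"
      using SUP_absK_le_iff_val_ge[OF a] k(1) by blast
    have "absK (a n1) = real CARD('a) powi (- k)" using k by (intro absK_eq_if_val_exact)
    thus "real CARD('a) powi (- k) \<le> (SUP n. absK (a n))"
      using cSUP_upper[OF UNIV_I null_seq_bdd_absK[OF a], of n1] by simp
  qed
  moreover have "supnorm f = real CARD('a) powi (- k)"
  proof (rule antisym)
    show "supnorm f \<le> real CARD('a) powi (- k)" using supnorm_le_iff_val_ge[OF f] t1(3) by blast
    have "absK (f t1) = real CARD('a) powi (- k)" using t1 by (intro absK_eq_if_val_exact) auto
    thus "real CARD('a) powi (- k) \<le> supnorm f" using absK_le_supnorm[OF f t1(1)] by simp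
  qed
  ultimately show ?thesis by simp
qed

lemma same_norm_iff_supnorm_eq:
  assumes a: "null_seq a" and f: "f \<in> CK"
  shows "same_norm a f \<longleftrightarrow> supnorm f = (SUP n. absK (a n))"
proof
  assume "supnorm f = (SUP n. absK (a n))"
  thus "same_norm a f"
    unfolding same_norm_def using SUP_absK_le_iff_val_ge[OF a] supnorm_le_iff_val_ge[OF f] by metis
qed (rule supnorm_eq_if_same_norm[OF a f])

definition ONB_val :: "(nat \<Rightarrow> 'a::{finite,field} fls \<Rightarrow> 'a fls) \<Rightarrow> bool" where
  "ONB_val b \<longleftrightarrow> (\<forall>f\<in>CK. \<exists>!a. null_seq a \<and> has_expansion a b f) \<and>
     (\<forall>f\<in>CK. \<forall>a. null_seq a \<and> has_expansion a b f \<longrightarrow> same_norm a f)"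

lemma is_ONB_iff_ONB_val:
  fixes b :: "nat \<Rightarrow> 'a::{finite,field} fls \<Rightarrow> 'a fls"
  assumes b: "\<And>n. b n \<in> CK"
  shows "is_ONB b \<longleftrightarrow> ONB_val b"
proof -
  have coeffs: "((\<lambda>n. absK (a n)) \<longlonglongrightarrow> 0 \<and> series_rep a b f) \<longleftrightarrow> null_seq a \<and> has_expansion a b f"
    if "f \<in> CK" for f :: "'a fls \<Rightarrow> 'a fls" and a
    using absK_tendsto_0_iff series_rep_iff_has_expansion[of f b a, OF that b] by blast
  have norm: "supnorm f = (SUP n. absK (a n)) \<longleftrightarrow> same_norm a f"
    if "f \<in> CK" "null_seq a" for f :: "'a fls \<Rightarrow> 'a fls" and a
    using same_norm_iff_supnorm_eq[OF that(2,1)] by simp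
  show ?thesis
    unfolding is_ONB_def ONB_val_def using b by (simp add: coeffs norm cong: conj_cong)
qed

definition O_unit :: "'a::{finite,field} fls \<Rightarrow> bool" where
  "O_unit u \<longleftrightarrow> u \<noteq> 0 \<and> fls_subdegree u = 0"

lemma val_ge_mult_O_unit: "O_unit u \<Longrightarrow> val_ge (u * x) k \<longleftrightarrow> val_ge x k"
  by (cases "x = 0") (auto simp: O_unit_def val_ge_iff_subdegree)

lemma O_unit_val_ge_0: "O_unit u \<Longrightarrow> val_ge u 0"
  by (simp add: O_unit_def val_ge_iff_subdegree)

lemma O_unit_inverse: "O_unit u \<Longrightarrow> O_unit (inverse u)"
  by (simp add: O_unit_def)

lemma O_unit_mult: "O_unit u \<Longrightarrow> O_unit v \<Longrightarrow> O_unit (u * v)"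
  by (simp add: O_unit_def)

lemma O_unit_1: "O_unit 1"
  by (simp add: O_unit_def)

lemma O_unit_prod: "(\<And>i. i \<in> I \<Longrightarrow> O_unit (u i)) \<Longrightarrow> O_unit (\<Prod>i\<in>I. u i)"
  by (induction I rule: infinite_finite_induct) (auto intro: O_unit_mult simp: O_unit_1)

lemma O_unit_power: "O_unit u \<Longrightarrow> O_unit (u ^ n)"
  using O_unit_prod[of "{..<n}" "\<lambda>_. u"] by simp

lemma ONB_val_scale:
  fixes b :: "nat \<Rightarrow> 'a::{finite,field} fls \<Rightarrow> 'a fls"
  assumes b: "ONB_val b" and u: "\<And>n. O_unit (u n)"
  shows "ONB_val (\<lambda>n t. u n * b n t)"
proof -
  have null: "null_seq (\<lambda>n. a n * u n) \<longleftrightarrow> null_seq a" for a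
    unfolding null_seq_def using val_ge_mult_O_unit[OF u] by (simp add: mult.commute)
  have norm: "same_norm (\<lambda>n. a n * u n) f \<longleftrightarrow> same_norm a f" for a f
    unfolding same_norm_def using val_ge_mult_O_unit[OF u] by (simp add: mult.commute)
  have unscale: "a = (\<lambda>n. a' n * inverse (u n))" if "(\<lambda>n. a n * u n) = a'" for a a'
  proof
    fix n
    have "u n \<noteq> 0" using u by (simp add: O_unit_def)
    thus "a n = a' n * inverse (u n)" using that by (auto simp: field_simps)
  qed
  show ?thesis unfolding ONB_val_def
  proof (intro conjI ballI allI impI)
    fix f :: "'a fls \<Rightarrow> 'a fls" assume "f \<in> CK"
    then obtain a0 where a0: "null_seq a0 \<and> has_expansion a0 b f"
      and a0_unique: "\<And>a. null_seq a \<and> has_expansion a b f \<Longrightarrow> a = a0"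
      using b unfolding ONB_val_def by metis
    define a where "a n = a0 n * inverse (u n)" for n
    have "(\<lambda>n. a n * u n) = a0" using u by (simp add: a_def O_unit_def fun_eq_iff)
    show "\<exists>!a. null_seq a \<and> has_expansion a (\<lambda>n t. u n * b n t) f"
    proof
      show "null_seq a \<and> has_expansion a (\<lambda>n t. u n * b n t) f"
        using a0 null[of a] has_expansion_scale[of a u b f] \<open>(\<lambda>n. a n * u n) = a0\<close> by simp
      fix a' assume "null_seq a' \<and> has_expansion a' (\<lambda>n t. u n * b n t) f"
      hence "(\<lambda>n. a' n * u n) = a0"
        using a0_unique null[of a'] has_expansion_scale[of a' u b f] by simp
      thus "a' = a" unfolding a_def[abs_def] by (rule unscale)
    qed
  next
    fix f :: "'a fls \<Rightarrow> 'a fls" and a assume "f \<in> CK" "null_seq a \<and> has_expansion a (\<lambda>n t. u n * b n t) f"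
    hence "same_norm (\<lambda>n. a n * u n) f"
      using b null[of a] has_expansion_scale[of a u b f] unfolding ONB_val_def by simp
    thus "same_norm a f" by (simp add: norm)
  qed
qed

section \<open>Perturbation of orthonormal bases\<close>

locale ONB_perturbation =
  fixes b c :: "nat \<Rightarrow> 'a::{finite,field} fls \<Rightarrow> 'a fls"
  assumes ONB_b: "ONB_val b"
    and b_CK: "\<And>n. b n \<in> CK" and c_CK: "\<And>n. c n \<in> CK"
    and b_integral: "\<And>n t. t \<in> OK \<Longrightarrow> val_ge (b n t) 0"
    and c_close: "\<And>n t. t \<in> OK \<Longrightarrow> val_ge (c n t - b n t) 1"
begin

definition err :: "nat \<Rightarrow> 'a fls \<Rightarrow> 'a fls" where
  "err n t = b n t - c n t"

lemma err_val_ge: "t \<in> OK \<Longrightarrow> val_ge (err n t) 1"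
  unfolding err_def using c_close val_ge_diff_commute by blast

lemma err_CK: "err n \<in> CK"
  unfolding err_def[abs_def] by (intro CK_diff b_CK c_CK)

lemma c_integral: "t \<in> OK \<Longrightarrow> val_ge (c n t) 0"
proof -
  assume t: "t \<in> OK"
  have "val_ge (b n t - err n t) 0"
    using b_integral[OF t] val_ge_mono[OF err_val_ge[OF t]] by (intro val_ge_diff) simp_all
  thus ?thesis by (simp add: err_def)
qed

lemma b_minus_err: "(\<lambda>n t. b n t - err n t) = c"
  by (simp add: err_def)

lemma has_expansion_expansion_fun_b: "null_seq A \<Longrightarrow> has_expansion A b (expansion_fun A b)"
  by (rule has_expansion_expansion_fun) (auto intro: b_integral)

lemma has_expansion_expansion_fun_err: "null_seq A \<Longrightarrow> has_expansion A err (expansion_fun A err)"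
  by (rule has_expansion_expansion_fun) (auto intro: err_val_ge)

lemma same_norm_expansion_fun_b: "null_seq A \<Longrightarrow> same_norm A (expansion_fun A b)"
  using ONB_b has_expansion_expansion_fun_b expansion_fun_CK[where b=b and j=0] b_integral b_CK
  unfolding ONB_val_def by blast

lemma expansion_fun_err_val_ge:
  "null_seq A \<Longrightarrow> (\<And>n. val_ge (A n) k) \<Longrightarrow> t \<in> OK \<Longrightarrow> val_ge (expansion_fun A err t) (k + 1)"
  by (rule expansion_fun_val_ge) (auto intro: err_val_ge)

lemma has_expansion_c_decompose:
  assumes "null_seq A" "has_expansion A c f" "t \<in> OK"
  shows "f t = expansion_fun A b t - expansion_fun A err t"
proof -
  have "has_expansion A c (\<lambda>t. expansion_fun A b t - expansion_fun A err t)"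
    using has_expansion_diff_basis[OF has_expansion_expansion_fun_b[OF assms(1)]
        has_expansion_expansion_fun_err[OF assms(1)]]
    by (simp add: b_minus_err)
  from has_expansion_unique[OF assms(2) this assms(3)] show ?thesis .
qed

lemma c_coeffs_raise_val:
  assumes A: "null_seq A" "has_expansion A c f"
    and k: "\<And>n. val_ge (A n) k" and f: "\<And>t. t \<in> OK \<Longrightarrow> val_ge (f t) (k + 1)"
  shows "val_ge (A n) (k + 1)"
proof -
  have "val_ge (expansion_fun A b t) (k + 1)" if t: "t \<in> OK" for t
  proof -
    have "expansion_fun A b t = f t + expansion_fun A err t"
      using has_expansion_c_decompose[OF A t] by simp
    thus ?thesis using val_ge_add[OF f[OF t] expansion_fun_err_val_ge[OF A(1) k t]] by simp
  qed
  thus ?thesis using same_norm_expansion_fun_b[OF A(1)] unfolding same_norm_def by blast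
qed

lemma c_coeffs_val_ge:
  assumes A: "null_seq A" "has_expansion A c f" and f: "\<And>t. t \<in> OK \<Longrightarrow> val_ge (f t) k"
  shows "val_ge (A n) k"
proof -
  obtain k0 where k0: "\<And>n. val_ge (A n) k0" using null_seq_lower_bound[OF A(1)] by blast
  have "i \<le> k \<longrightarrow> (\<forall>n. val_ge (A n) i)" if "min k0 k \<le> i" for i
    using that
  proof (induction i rule: int_ge_induct)
    case base
    show ?case using k0 val_ge_mono by (meson min.cobounded1)
  next
    case (step i)
    have "\<And>t. t \<in> OK \<Longrightarrow> val_ge (f t) (i + 1)" if "i + 1 \<le> k"
      using f val_ge_mono that by blast
    thus ?case using step.IH c_coeffs_raise_val[OF A] by simp
  qed
  thus ?thesis by simp
qed

lemma same_norm_c: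
  assumes A: "null_seq A" "has_expansion A c f"
  shows "same_norm A f"
  unfolding same_norm_def
proof (intro allI iffI ballI)
  fix k and t :: "'a fls" assume k: "\<forall>n. val_ge (A n) k" and t: "t \<in> OK"
  have "val_ge (expansion_fun A b t) k"
    using same_norm_expansion_fun_b[OF A(1)] k t unfolding same_norm_def by blast
  moreover have "val_ge (expansion_fun A err t) k"
    using expansion_fun_err_val_ge[OF A(1) _ t] k val_ge_mono by fastforce
  ultimately show "val_ge (f t) k"
    using has_expansion_c_decompose[OF A t] val_ge_diff by metis
qed (use c_coeffs_val_ge[OF A] in blast)

lemma c_coeffs_unique:
  assumes "null_seq A" "has_expansion A c f" "null_seq A'" "has_expansion A' c f"
  shows "A = A'"
proof
  fix n
  have "has_expansion (\<lambda>n. A n - A' n) c (\<lambda>t. 0)"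
    using has_expansion_diff[OF assms(2,4)] by simp
  hence "val_ge (A n - A' n) k" for k
    using c_coeffs_val_ge[OF null_seq_diff[OF assms(1,3)]] by simp
  thus "A n = A' n" using val_ge_all_imp_0[of "A n - A' n"] by simp
qed

definition b_coeffs :: "('a fls \<Rightarrow> 'a fls) \<Rightarrow> nat \<Rightarrow> 'a fls" where
  "b_coeffs f = (THE a. null_seq a \<and> has_expansion a b f)"

lemma b_coeffs: "f \<in> CK \<Longrightarrow> null_seq (b_coeffs f) \<and> has_expansion (b_coeffs f) b f"
proof -
  assume "f \<in> CK"
  hence "\<exists>!a. null_seq a \<and> has_expansion a b f" using ONB_b unfolding ONB_val_def by blast
  thus ?thesis unfolding b_coeffs_def by (rule theI')
qed

lemma b_coeffs_val_ge:
  "f \<in> CK \<Longrightarrow> (\<And>t. t \<in> OK \<Longrightarrow> val_ge (f t) k) \<Longrightarrow> val_ge (b_coeffs f n) k"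
proof -
  assume f: "f \<in> CK" and k: "\<And>t. t \<in> OK \<Longrightarrow> val_ge (f t) k"
  have "same_norm (b_coeffs f) f" using ONB_b b_coeffs[OF f] f unfolding ONB_val_def by blast
  thus ?thesis using k unfolding same_norm_def by blast
qed

text \<open>The b-coefficients of f, used against c, expand f - correction f; and correction f is
  smaller than f by a factor |T|, so iterating the correction converges.\<close>

definition correction :: "('a fls \<Rightarrow> 'a fls) \<Rightarrow> 'a fls \<Rightarrow> 'a fls" where
  "correction f = expansion_fun (b_coeffs f) err"

lemma correction_CK: "f \<in> CK \<Longrightarrow> correction f \<in> CK"
  unfolding correction_def
  by (rule expansion_fun_CK[OF conjunct1[OF b_coeffs]]) (auto intro: err_val_ge err_CK)

lemma has_expansion_correction:
  assumes "f \<in> CK"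
  shows "has_expansion (b_coeffs f) c (\<lambda>t. f t - correction f t)"
  using has_expansion_diff_basis[OF conjunct2[OF b_coeffs[OF assms]]
      has_expansion_expansion_fun_err[OF conjunct1[OF b_coeffs[OF assms]]]]
  by (simp add: correction_def b_minus_err)

lemma correction_val_ge:
  assumes "f \<in> CK" "\<And>t. t \<in> OK \<Longrightarrow> val_ge (f t) k" "t \<in> OK"
  shows "val_ge (correction f t) (k + 1)"
  unfolding correction_def
  using expansion_fun_err_val_ge[OF conjunct1[OF b_coeffs[OF assms(1)]] b_coeffs_val_ge[OF assms(1,2)]
      assms(3)] .

context
  fixes f :: "'a fls \<Rightarrow> 'a fls" and k0 :: int
  assumes f_CK: "f \<in> CK" and f_val_ge: "\<And>t. t \<in> OK \<Longrightarrow> val_ge (f t) k0"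
begin

definition approx :: "nat \<Rightarrow> 'a fls \<Rightarrow> 'a fls" where
  "approx i = (correction ^^ i) f"

definition approx_coeffs :: "nat \<Rightarrow> nat \<Rightarrow> 'a fls" where
  "approx_coeffs i = b_coeffs (approx i)"

lemma approx_CK: "approx i \<in> CK"
  by (induction i) (simp_all add: approx_def f_CK correction_CK)

lemma approx_val_ge: "t \<in> OK \<Longrightarrow> val_ge (approx i t) (k0 + int i)"
proof (induction i arbitrary: t)
  case 0 thus ?case by (simp add: approx_def f_val_ge)
next
  case (Suc i)
  thus ?case using correction_val_ge[OF approx_CK Suc.IH] by (simp add: approx_def ac_simps)
qed

lemma approx_coeffs_val_ge: "val_ge (approx_coeffs i n) (k0 + int i)"
  unfolding approx_coeffs_def using b_coeffs_val_ge[OF approx_CK approx_val_ge] .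

lemma has_expansion_approx_coeffs:
  "has_expansion (approx_coeffs i) c (\<lambda>t. approx i t - approx (Suc i) t)"
  using has_expansion_correction[OF approx_CK] by (simp add: approx_coeffs_def approx_def)

definition iterated_coeffs :: "nat \<Rightarrow> 'a fls" where
  "iterated_coeffs n = fls_suminf (\<lambda>i. approx_coeffs i n)"

lemma iterated_coeffs_tail: "val_ge (iterated_coeffs n - (\<Sum>i<N. approx_coeffs i n)) (k0 + int N)"
proof -
  have "null_seq (\<lambda>i. approx_coeffs i n)" unfolding null_seq_def
  proof
    fix k
    have "val_ge (approx_coeffs i n) k" if "nat (k - k0) \<le> i" for i
      using approx_coeffs_val_ge[of i n] by (rule val_ge_mono) (use that in linarith)
    thus "\<exists>N. \<forall>i\<ge>N. val_ge (approx_coeffs i n) k" by blast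
  qed
  moreover have "\<forall>i\<ge>N. val_ge (approx_coeffs i n) (k0 + int N)"
    by (auto intro: val_ge_mono[OF approx_coeffs_val_ge])
  ultimately show ?thesis unfolding iterated_coeffs_def by (rule fls_suminf_approx)
qed

lemma null_seq_iterated_coeffs: "null_seq iterated_coeffs"
  unfolding null_seq_def
proof
  fix k
  define N where "N = nat (k - k0)"
  have "null_seq (\<lambda>n. \<Sum>i<N. approx_coeffs i n)"
    using b_coeffs[OF approx_CK] by (intro null_seq_sum) (simp add: approx_coeffs_def)
  then obtain M where M: "\<forall>n\<ge>M. val_ge (\<Sum>i<N. approx_coeffs i n) k"
    unfolding null_seq_def by blast
  have "val_ge (iterated_coeffs n) k" if "M \<le> n" for n
  proof -
    have "val_ge (iterated_coeffs n - (\<Sum>i<N. approx_coeffs i n)) k"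
      using iterated_coeffs_tail by (rule val_ge_mono) (simp add: N_def)
    from val_ge_add[OF this M[rule_format, OF that]] show ?thesis by simp
  qed
  thus "\<exists>M. \<forall>n\<ge>M. val_ge (iterated_coeffs n) k" by blast
qed

lemma has_expansion_iterated_coeffs: "has_expansion iterated_coeffs c f"
proof -
  let ?g = "expansion_fun iterated_coeffs c"
  have g: "has_expansion iterated_coeffs c ?g"
    by (rule has_expansion_expansion_fun[OF null_seq_iterated_coeffs]) (auto intro: c_integral)
  have close: "val_ge (?g t - f t) (k0 + int N)" if t: "t \<in> OK" for t N
  proof -
    have "has_expansion (\<lambda>n. \<Sum>i<N. approx_coeffs i n) c (\<lambda>t. \<Sum>i<N. approx i t - approx (Suc i) t)"
      by (rule has_expansion_sum) (rule has_expansion_approx_coeffs)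
    moreover have "(\<Sum>i<N. approx i t - approx (Suc i) t) = f t - approx N t" for t
      using sum_lessThan_telescope'[of "\<lambda>i. approx i t" N] by (simp add: approx_def)
    ultimately have "has_expansion (\<lambda>n. \<Sum>i<N. approx_coeffs i n) c (\<lambda>t. f t - approx N t)"
      by simp
    from has_expansion_diff[OF g this]
    have "val_ge (?g t - (f t - approx N t)) (k0 + int N)"
      by (rule has_expansion_val_ge) (auto intro: c_integral iterated_coeffs_tail t)
    from val_ge_diff[OF this approx_val_ge[OF t]] show ?thesis by simp
  qed
  have "?g t = f t" if t: "t \<in> OK" for t
  proof -
    have "val_ge (?g t - f t) k" for k
      using close[OF t, of "nat (k - k0)"] by (rule val_ge_mono) linarith
    thus ?thesis using val_ge_all_imp_0[of "?g t - f t"] by simp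
  qed
  from has_expansion_cong[OF this g] show ?thesis .
qed

end

theorem ONB_val_c: "ONB_val c"
  unfolding ONB_val_def
proof (intro conjI ballI allI impI)
  fix f :: "'a fls \<Rightarrow> 'a fls" assume f: "f \<in> CK"
  obtain k0 where k0: "\<And>t. t \<in> OK \<Longrightarrow> val_ge (f t) k0" using CK_val_lower_bound[OF f] by blast
  show "\<exists>!a. null_seq a \<and> has_expansion a c f"
  proof (rule ex1I)
    show "null_seq (iterated_coeffs f) \<and> has_expansion (iterated_coeffs f) c f"
      using null_seq_iterated_coeffs[OF f k0] has_expansion_iterated_coeffs[OF f k0] by blast
    show "a = iterated_coeffs f" if "null_seq a \<and> has_expansion a c f" for a
      using that c_coeffs_unique null_seq_iterated_coeffs[OF f k0] has_expansion_iterated_coeffs[OF f k0]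
      by blast
  qed
qed (use same_norm_c in blast)

end

lemma ONB_val_iff_unit_multiple:
  fixes b c :: "nat \<Rightarrow> 'a::{finite,field} fls \<Rightarrow> 'a fls"
  assumes b_CK: "\<And>n. b n \<in> CK" and c_CK: "\<And>n. c n \<in> CK"
    and b_integral: "\<And>n t. t \<in> OK \<Longrightarrow> val_ge (b n t) 0"
    and c_integral: "\<And>n t. t \<in> OK \<Longrightarrow> val_ge (c n t) 0"
    and u: "\<And>n. O_unit (u n)"
    and close: "\<And>n t. t \<in> OK \<Longrightarrow> val_ge (c n t - u n * b n t) 1"
  shows "ONB_val b \<longleftrightarrow> ONB_val c"
proof
  assume "ONB_val b"
  then interpret ONB_perturbation "\<lambda>n t. u n * b n t" c
    by unfold_locales
       (auto simp: val_ge_mult_O_unit u b_integral c_CK close intro: ONB_val_scale CK_mult CK_const b_CK)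
  show "ONB_val c" by (rule ONB_val_c)
next
  assume "ONB_val c"
  moreover have "val_ge (b n t - inverse (u n) * c n t) 1" if "t \<in> OK" for n t
  proof -
    have "b n t - inverse (u n) * c n t = - (inverse (u n) * (c n t - u n * b n t))"
      using u[of n] by (simp add: O_unit_def algebra_simps)
    thus ?thesis using close[OF that] by (simp add: val_ge_mult_O_unit O_unit_inverse u)
  qed
  ultimately interpret ONB_perturbation "\<lambda>n t. inverse (u n) * c n t" b
    by unfold_locales
       (auto simp: val_ge_mult_O_unit O_unit_inverse u c_integral b_CK
         intro: ONB_val_scale O_unit_inverse CK_mult CK_const c_CK)
  show "ONB_val b" by (rule ONB_val_c)
qed

section \<open>Carlitz polynomials and digit derivatives modulo T\<close>

definition cong_T :: "'a::{finite,field} fls \<Rightarrow> 'a fls \<Rightarrow> bool" where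
  "cong_T x y \<longleftrightarrow> val_ge x 0 \<and> val_ge y 0 \<and> val_ge (x - y) 1"

lemma cong_T_sym: "cong_T x y \<Longrightarrow> cong_T y x"
  unfolding cong_T_def using val_ge_diff_commute by blast

lemma cong_T_trans: "cong_T x y \<Longrightarrow> cong_T y z \<Longrightarrow> cong_T x z"
  unfolding cong_T_def using val_ge_add[of "x - y" 1 "y - z"] by simp

lemma cong_T_mult:
  assumes "cong_T x y" "cong_T x' y'"
  shows "cong_T (x * x') (y * y')"
proof -
  have "val_ge (x * (x' - y')) 1"
    using val_ge_mult[of x 0 "x' - y'" 1] assms by (simp add: cong_T_def)
  moreover have "val_ge ((x - y) * y') 1"
    using val_ge_mult[of "x - y" 1 y' 0] assms by (simp add: cong_T_def)
  ultimately have "val_ge (x * (x' - y') + (x - y) * y') 1" by (rule val_ge_add)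
  moreover have "x * (x' - y') + (x - y) * y' = x * x' - y * y'" by (simp add: algebra_simps)
  ultimately show ?thesis
    using assms val_ge_mult[of _ 0 _ 0] unfolding cong_T_def by fastforce
qed

lemma cong_T_1: "cong_T 1 1"
  by (simp add: cong_T_def val_ge_def)

lemma cong_T_1_iff: "cong_T x 1 \<longleftrightarrow> val_ge (x - 1) 1"
  unfolding cong_T_def
  using val_ge_add[of "x - 1" 0 1] val_ge_mono[of "x - 1" 1 0] by (auto simp: val_ge_def[of 1])

lemma cong_T_prod: "(\<And>i. i \<in> I \<Longrightarrow> cong_T (x i) (y i)) \<Longrightarrow> cong_T (\<Prod>i\<in>I. x i) (\<Prod>i\<in>I. y i)"
  by (induction I rule: infinite_finite_induct) (auto intro: cong_T_mult simp: cong_T_1)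

lemma cong_T_power: "cong_T x y \<Longrightarrow> cong_T (x ^ n) (y ^ n)"
  using cong_T_prod[of "{..<n}" "\<lambda>_. x" "\<lambda>_. y"] by simp

lemma cong_T_mult_O_unit:
  assumes "O_unit u" "cong_T x y"
  shows "cong_T (u * x) (u * y)"
proof -
  have "cong_T u u" using O_unit_val_ge_0[OF assms(1)] by (simp add: cong_T_def)
  thus ?thesis using cong_T_mult assms(2) by blast
qed

lemma hasseD_cong_T: "cong_T (hasseD n x) (fls_const (fls_nth x (int n)))"
  unfolding cong_T_def val_ge_def hasseD_def by auto

lemma val_ge_divide:
  "val_ge x k \<Longrightarrow> y \<noteq> 0 \<Longrightarrow> val_ge (x / y :: 'a::field fls) (k - fls_subdegree y)"
  by (cases "x = 0") (auto simp: val_ge_iff_subdegree divide_inverse)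

lemma fls_subdegree_prod_nonzero:
  fixes F :: "'b \<Rightarrow> 'a::idom fls"
  assumes "\<And>i. i \<in> I \<Longrightarrow> F i \<noteq> 0"
  shows "fls_subdegree (\<Prod>i\<in>I. F i) = (\<Sum>i\<in>I. fls_subdegree (F i))"
  using assms by (induction I rule: infinite_finite_induct) auto

lemma low_polys_0: "0 \<in> low_polys n"
  by (simp add: low_polys_def)

lemma low_polys_add: "y \<in> low_polys n \<Longrightarrow> z \<in> low_polys n \<Longrightarrow> y + z \<in> low_polys n"
  by (simp add: low_polys_def)

lemma low_polys_diff: "y \<in> low_polys n \<Longrightarrow> z \<in> low_polys n \<Longrightarrow> y - z \<in> low_polys (n::nat)"
  by (simp add: low_polys_def)

lemma fls_subdegree_low_polys_less:
  assumes "y \<in> low_polys n" "y \<noteq> 0"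
  shows "fls_subdegree y < int n"
proof (rule ccontr)
  assume "\<not> fls_subdegree y < int n"
  hence "fls_nth y (fls_subdegree y) = 0" using assms(1) by (simp add: low_polys_def)
  thus False using assms(2) by simp
qed

lemma low_polys_eq_polys:
  assumes "1 \<le> n"
  shows "(\<lambda>m. fps_to_fls (fps_of_poly m)) ` {m::'a::field poly. degree m < n} = low_polys n"
proof
  show "(\<lambda>m. fps_to_fls (fps_of_poly m)) ` {m::'a poly. degree m < n} \<subseteq> low_polys n"
    by (auto simp: low_polys_def coeff_eq_0)
next
  show "low_polys n \<subseteq> (\<lambda>m. fps_to_fls (fps_of_poly m)) ` {m::'a poly. degree m < n}"
  proof
    fix y :: "'a fls" assume y: "y \<in> low_polys n"
    define m where "m = Poly (map (\<lambda>i. fls_nth y (int i)) [0..<n])"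
    have coeff_m: "coeff m i = (if i < n then fls_nth y (int i) else 0)" for i
      by (simp add: m_def nth_default_def)
    have "degree m \<le> n - 1" by (rule degree_le) (use assms in \<open>auto simp: coeff_m\<close>)
    moreover have "fps_to_fls (fps_of_poly m) = y"
      by (rule fls_eqI) (use y in \<open>auto simp: coeff_m low_polys_def not_less\<close>)
    ultimately show "y \<in> (\<lambda>m. fps_to_fls (fps_of_poly m)) ` {m. degree m < n}"
      using assms by force
  qed
qed

lemma carlitz_e_eq_prod_low_polys:
  assumes "1 \<le> n"
  shows "carlitz_e n x = (\<Prod>y\<in>low_polys n. x - y)"
proof -
  have "inj_on (\<lambda>m::'a poly. fps_to_fls (fps_of_poly m)) {m. degree m < n}"
    by (auto simp: inj_on_def fps_of_poly_eq_iff)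
  thus ?thesis
    unfolding carlitz_e_def low_polys_eq_polys[OF assms, symmetric] by (simp add: prod.reindex)
qed

lemma carlitz_e_translate:
  assumes "1 \<le> n" "z \<in> low_polys n"
  shows "carlitz_e n (x - z) = carlitz_e n x"
proof -
  have "bij_betw (\<lambda>y. y + z) (low_polys n) (low_polys n)"
    by (rule bij_betw_byWitness[where f'="\<lambda>y. y - z"])
       (auto intro: low_polys_add low_polys_diff assms(2))
  hence "(\<Prod>y\<in>low_polys n. x - (y + z)) = (\<Prod>y\<in>low_polys n. x - y)"
    by (rule prod.reindex_bij_betw)
  thus ?thesis unfolding carlitz_e_eq_prod_low_polys[OF assms(1)] by (simp add: algebra_simps)
qed

lemma low_polys_Suc_bij:
  "bij_betw (\<lambda>(c, y). y + fls_const c * fls_X ^ n) (UNIV \<times> low_polys n)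
     (low_polys (Suc n) :: 'a::field fls set)"
  by (rule bij_betw_byWitness
        [where f'="\<lambda>y. (fls_nth y (int n), y - fls_const (fls_nth y (int n)) * fls_X ^ n)"])
     (auto simp: low_polys_def)

lemma fls_subdegree_add_const_X_power:
  fixes y :: "'a::field fls"
  assumes "y \<in> low_polys n" "c \<noteq> 0"
  shows "fls_subdegree (y + fls_const c * fls_X ^ n) = fls_subdegree y + (if y = 0 then int n else 0)"
proof (cases "y = 0")
  case False
  have "fls_subdegree (fls_const c * fls_X ^ n :: 'a fls) = int n" using assms(2) by simp
  hence "fls_subdegree (y + fls_const c * fls_X ^ n) = fls_subdegree y"
    using fls_subdegree_low_polys_less[OF assms(1) False] False by (intro fls_subdegree_add_eq1) auto
  thus ?thesis using False by simp
qed (use assms in simp)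

lemma sum_power_diff_Suc:
  "(\<Sum>i=1..Suc n. (q::'a::comm_semiring_1) ^ (Suc n - i)) = q * (\<Sum>i=1..n. q ^ (n - i)) + 1"
proof -
  have "(\<Sum>i=1..Suc n. q ^ (Suc n - i)) = (\<Sum>i=1..n. q ^ (Suc n - i)) + 1"
    by simp
  also have "(\<Sum>i=1..n. q ^ (Suc n - i)) = q * (\<Sum>i=1..n. q ^ (n - i))"
    unfolding sum_distrib_left by (intro sum.cong) (auto simp: Suc_diff_le)
  finally show ?thesis .
qed

lemma sum_fls_subdegree_low_polys:
  "int n + (\<Sum>y\<in>(low_polys n :: 'a::{finite,field} fls set). fls_subdegree y)
     = (\<Sum>i=1..n. int CARD('a) ^ (n - i))"
proof (induction n)
  case 0
  have "low_polys 0 = {0 :: 'a fls}"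
    by (auto simp: low_polys_def low_polys_0 intro!: fls_zero_eqI)
  thus ?case by simp
next
  case (Suc n)
  let ?S = "\<lambda>n. \<Sum>y\<in>(low_polys n :: 'a fls set). fls_subdegree y"
  have "?S (Suc n) = (\<Sum>p\<in>UNIV \<times> (low_polys n :: 'a fls set).
      fls_subdegree ((\<lambda>(c, y). y + fls_const c * fls_X ^ n) p))"
    by (rule sum.reindex_bij_betw[OF low_polys_Suc_bij, symmetric])
  also have "\<dots> = (\<Sum>c\<in>UNIV. \<Sum>y\<in>(low_polys n :: 'a fls set). fls_subdegree (y + fls_const c * fls_X ^ n))"
    by (subst sum.cartesian_product) (simp add: case_prod_beta)
  also have "\<dots> = ?S n + (\<Sum>c\<in>UNIV - {0::'a}. \<Sum>y\<in>low_polys n. fls_subdegree (y + fls_const c * fls_X ^ n))"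
    by (subst sum.remove[of UNIV 0]) simp_all
  also have "(\<Sum>c\<in>UNIV - {0::'a}. \<Sum>y\<in>low_polys n. fls_subdegree (y + fls_const c * fls_X ^ n))
      = (\<Sum>c\<in>UNIV - {0::'a}. ?S n + int n)"
    by (intro sum.cong refl)
       (simp add: fls_subdegree_add_const_X_power sum.distrib finite_low_polys low_polys_0)
  also have "\<dots> = (int CARD('a) - 1) * (?S n + int n)"
    using one_less_CARD_field[where 'a='a] by (simp add: card_Diff_singleton)
  finally have "int (Suc n) + ?S (Suc n) = int CARD('a) * (int n + ?S n) + 1"
    by (simp add: algebra_simps)
  thus ?case unfolding Suc.IH sum_power_diff_Suc .
qed

lemma fls_subdegree_bracketK:
  assumes "1 \<le> n"
  shows "bracketK n \<noteq> (0 :: 'a::{finite,field} fls)" "fls_subdegree (bracketK n :: 'a fls) = 1"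
proof -
  have "1 < CARD('a) ^ n"
    using one_less_CARD_field[where 'a='a] assms by (intro one_less_power) auto
  hence q: "(1::int) < int (CARD('a) ^ n)" by linarith
  hence "fls_nth (bracketK n :: 'a fls) 1 \<noteq> 0" by (simp add: bracketK_def)
  thus "bracketK n \<noteq> (0 :: 'a fls)" by auto
  show "fls_subdegree (bracketK n :: 'a fls) = 1"
    unfolding bracketK_def using q by (subst fls_subdegree_diff_eq2) auto
qed

lemma fls_subdegree_carlitzF:
  "carlitzF n \<noteq> (0 :: 'a::{finite,field} fls)"
  "fls_subdegree (carlitzF n :: 'a fls) = (\<Sum>i=1..n. int CARD('a) ^ (n - i))"
proof -
  have nz: "bracketK i ^ (CARD('a) ^ (n - i)) \<noteq> (0 :: 'a fls)" if "i \<in> {1..n}" for i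
    using fls_subdegree_bracketK(1)[of i] that by simp
  thus "carlitzF n \<noteq> (0 :: 'a fls)" by (simp add: carlitzF_def)
  have "fls_subdegree (carlitzF n :: 'a fls)
      = (\<Sum>i=1..n. fls_subdegree (bracketK i ^ (CARD('a) ^ (n - i)) :: 'a fls))"
    unfolding carlitzF_def using nz by (rule fls_subdegree_prod_nonzero)
  also have "\<dots> = (\<Sum>i=1..n. int CARD('a) ^ (n - i))"
    by (intro sum.cong) (auto simp: fls_subdegree_pow fls_subdegree_bracketK)
  finally show "fls_subdegree (carlitzF n :: 'a fls) = (\<Sum>i=1..n. int CARD('a) ^ (n - i))" .
qed

lemma X_power_minus_low_polys_nonzero: "y \<in> low_polys n \<Longrightarrow> fls_X ^ n - y \<noteq> 0"
  by (auto simp: low_polys_def dest: arg_cong[of _ _ "\<lambda>z. fls_nth z (int n)"])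

lemma fls_subdegree_carlitz_e_X_power:
  assumes "1 \<le> n"
  shows "carlitz_e n (fls_X ^ n) \<noteq> (0 :: 'a::{finite,field} fls)"
    "fls_subdegree (carlitz_e n (fls_X ^ n) :: 'a fls) = (\<Sum>i=1..n. int CARD('a) ^ (n - i))"
proof -
  have nz: "\<And>y. y \<in> low_polys n \<Longrightarrow> fls_X ^ n - y \<noteq> (0 :: 'a fls)"
    by (rule X_power_minus_low_polys_nonzero)
  thus "carlitz_e n (fls_X ^ n) \<noteq> (0 :: 'a fls)"
    by (simp add: carlitz_e_eq_prod_low_polys[OF assms] finite_low_polys)
  have sd: "fls_subdegree (fls_X ^ n - y :: 'a fls) = fls_subdegree y + (if y = 0 then int n else 0)"
    if "y \<in> low_polys n" for y
    using fls_subdegree_low_polys_less[OF that] by (auto simp: fls_subdegree_diff_eq2)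
  have "fls_subdegree (carlitz_e n (fls_X ^ n) :: 'a fls)
      = (\<Sum>y\<in>(low_polys n :: 'a fls set). fls_subdegree y + (if y = 0 then int n else 0))"
    unfolding carlitz_e_eq_prod_low_polys[OF assms] using nz
    by (simp add: fls_subdegree_prod_nonzero sd cong: sum.cong)
  also have "\<dots> = int n + (\<Sum>y\<in>(low_polys n :: 'a fls set). fls_subdegree y)"
    by (simp add: sum.distrib finite_low_polys low_polys_0)
  finally show "fls_subdegree (carlitz_e n (fls_X ^ n) :: 'a fls) = (\<Sum>i=1..n. int CARD('a) ^ (n - i))"
    by (simp add: sum_fls_subdegree_low_polys)
qed

lemma O_unit_carlitzE_X_power: "O_unit (carlitzE n (fls_X ^ n) :: 'a::{finite,field} fls)"
  using fls_subdegree_carlitz_e_X_power[of n, where 'a='a] fls_subdegree_carlitzF[of n, where 'a='a]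
  by (auto simp: O_unit_def carlitzE_def divide_inverse)

lemma carlitz_e_ratio_cong_T:
  assumes n: "1 \<le> n" and x: "x \<in> OK"
  shows "cong_T (carlitz_e n x / carlitz_e n (fls_X ^ n)) (fls_const (fls_nth x (int n)))"
proof -
  \<comment> \<open>With x' = T^n v the ratio is v times the factors (x' - y) / (T^n - y) = 1 + O(T), y \<noteq> 0,
    since v(y) < n \<le> v(x' - T^n).\<close>
  define x' where "x' = x - trunc_fls n x"
  have x'_val: "val_ge x' (int n)" unfolding x'_def by (rule val_ge_sub_trunc_fls[OF x])
  define R where "R = low_polys n - {0 :: 'a fls}"
  have factor: "cong_T ((x' - y) / (fls_X ^ n - y)) 1" if y: "y \<in> R" for y
  proof -
    have y_low: "y \<in> low_polys n" "y \<noteq> 0" using y by (auto simp: R_def)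
    have nz: "fls_X ^ n - y \<noteq> 0" by (rule X_power_minus_low_polys_nonzero[OF y_low(1)])
    have sd: "fls_subdegree (fls_X ^ n - y) < int n"
      using fls_subdegree_low_polys_less[OF y_low] y_low(2) by (simp add: fls_subdegree_diff_eq2)
    have "val_ge (x' - fls_X ^ n) (int n)" using x'_val by (rule val_ge_diff) (simp add: val_ge_def)
    hence "val_ge ((x' - fls_X ^ n) / (fls_X ^ n - y)) (int n - fls_subdegree (fls_X ^ n - y))"
      using nz by (rule val_ge_divide)
    hence "val_ge ((x' - fls_X ^ n) / (fls_X ^ n - y)) 1"
      by (rule val_ge_mono) (use sd in linarith)
    moreover have "(x' - y) / (fls_X ^ n - y) - 1 = (x' - fls_X ^ n) / (fls_X ^ n - y)"
      using nz by (simp add: field_simps)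
    ultimately show ?thesis by (simp add: cong_T_1_iff)
  qed
  have split: "carlitz_e n z = z * (\<Prod>y\<in>R. z - y)" for z
    using prod.remove[OF finite_low_polys low_polys_0, of "\<lambda>y. z - y" n]
    by (simp add: carlitz_e_eq_prod_low_polys[OF n] R_def)
  have "carlitz_e n x = carlitz_e n x'"
    unfolding x'_def by (rule carlitz_e_translate[OF n trunc_fls_in_low_polys, symmetric])
  hence "carlitz_e n x / carlitz_e n (fls_X ^ n)
      = (x' / fls_X ^ n) * (\<Prod>y\<in>R. (x' - y) / (fls_X ^ n - y))"
    by (simp only: split prod_dividef times_divide_times_eq)
  moreover have "cong_T (x' / fls_X ^ n) (fls_const (fls_nth x (int n)))"
    using x'_val by (auto simp: cong_T_def val_ge_def x'_def trunc_fls_nth)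
  ultimately show ?thesis
    using cong_T_mult[OF _ cong_T_prod[OF factor]] by fastforce
qed

lemma carlitzE_cong_T:
  assumes x: "x \<in> OK"
  shows "cong_T (carlitzE n x) (carlitzE n (fls_X ^ n) * fls_const (fls_nth x (int n)))"
proof (cases "n = 0")
  case True
  thus ?thesis using x by (simp add: carlitzE_def cong_T_def OK_iff_val_ge val_ge_def)
next
  case False
  have "cong_T (carlitzE n (fls_X ^ n) * (carlitz_e n x / carlitz_e n (fls_X ^ n)))
      (carlitzE n (fls_X ^ n) * fls_const (fls_nth x (int n)))"
    using False x by (intro cong_T_mult_O_unit O_unit_carlitzE_X_power carlitz_e_ratio_cong_T) auto
  moreover have "carlitzE n (fls_X ^ n) * (carlitz_e n x / carlitz_e n (fls_X ^ n)) = carlitzE n x"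
    using False fls_subdegree_carlitz_e_X_power(1)[of n, where 'a='a] by (simp add: carlitzE_def)
  ultimately show ?thesis by simp
qed

lemma carlitzG_cong_T:
  fixes x :: "'a::{finite,field} fls"
  assumes x: "x \<in> OK"
  shows "cong_T (carlitzG j x) ((\<Prod>n\<le>j. carlitzE n (fls_X ^ n) ^ qdigit TYPE('a) j n) * digitD j x)"
proof -
  have "cong_T (carlitzE n x) (carlitzE n (fls_X ^ n) * hasseD n x)" for n
    using carlitzE_cong_T[OF x]
      cong_T_mult_O_unit[OF O_unit_carlitzE_X_power cong_T_sym[OF hasseD_cong_T]]
    by (blast intro: cong_T_trans)
  hence "cong_T (carlitzG j x) (\<Prod>n\<le>j. (carlitzE n (fls_X ^ n) * hasseD n x) ^ qdigit TYPE('a) j n)"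
    unfolding carlitzG_def by (intro cong_T_prod cong_T_power)
  also have "(\<Prod>n\<le>j. (carlitzE n (fls_X ^ n) * hasseD n x) ^ qdigit TYPE('a) j n)
      = (\<Prod>n\<le>j. carlitzE n (fls_X ^ n) ^ qdigit TYPE('a) j n) * digitD j x"
    by (simp add: digitD_def power_mult_distrib prod.distrib)
  finally show ?thesis .
qed

lemma hasseD_CK: "(hasseD n :: 'a::{finite,field} fls \<Rightarrow> 'a fls) \<in> CK"
proof -
  have "val_ge (hasseD n x - hasseD n y) k" if "val_ge (x - y) (k + int n)" for x y :: "'a fls" and k
    using that by (auto simp: val_ge_def hasseD_def)
  thus ?thesis unfolding CK_iff_uniformly_continuous by blast
qed

lemma carlitzE_CK: "carlitzE n \<in> CK"
proof (cases "n = 0")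
  case True
  thus ?thesis using CK_id by (simp add: carlitzE_def[abs_def])
next
  case False
  have "(\<lambda>x. inverse (carlitzF n) * (\<Prod>y\<in>low_polys n. x - y)) \<in> CK"
    by (intro CK_mult CK_const CK_prod CK_diff CK_id)
  thus ?thesis
    using False
    by (simp add: carlitzE_def[abs_def] carlitz_e_eq_prod_low_polys divide_inverse mult.commute)
qed

lemma carlitzG_CK: "carlitzG j \<in> CK"
  unfolding carlitzG_def[abs_def] by (intro CK_prod CK_power carlitzE_CK)

lemma digitD_CK: "digitD j \<in> CK"
  unfolding digitD_def[abs_def] by (intro CK_prod CK_power hasseD_CK)

theorem theorem6:
  shows "is_ONB (carlitzG :: nat \<Rightarrow> 'a::{finite,field} fls \<Rightarrow> 'a fls)
     \<longleftrightarrow> is_ONB (digitD :: nat \<Rightarrow> 'a fls \<Rightarrow> 'a fls)"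
proof -
  define u :: "nat \<Rightarrow> 'a fls" where "u j = (\<Prod>n\<le>j. carlitzE n (fls_X ^ n) ^ qdigit TYPE('a) j n)" for j
  have u: "O_unit (u j)" for j
    unfolding u_def by (intro O_unit_prod O_unit_power O_unit_carlitzE_X_power)
  have "cong_T (carlitzG j t) (u j * digitD j t)" if "t \<in> OK" for j t
    unfolding u_def by (rule carlitzG_cong_T[OF that])
  hence "ONB_val (digitD :: nat \<Rightarrow> 'a fls \<Rightarrow> 'a fls) \<longleftrightarrow> ONB_val (carlitzG :: nat \<Rightarrow> 'a fls \<Rightarrow> 'a fls)"
    by (intro ONB_val_iff_unit_multiple[where u=u])
       (auto simp: cong_T_def val_ge_mult_O_unit u digitD_CK carlitzG_CK)
  thus ?thesis by (simp add: is_ONB_iff_ONB_val carlitzG_CK digitD_CK)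
qed

end
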